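(* Let $G$ be a finite group with commutator subgroup $G'$. Then for each $d\in\mathbb{N}$ one has $|G'|\,E_d\in\mathbb{Z}[G']$.
   Context: $E_d=E_{G,d}:=\sum_{\chi}e_\chi$, the sum over all complex irreducible characters $\chi$ of $G$ of degree $\chi(1)=d$, where $e_\chi=\frac{\chi(1)}{|G|}\sum_{g\in G}\chi(g^{-1})g$. *)

theory Defs
  imports "HOL-Algebra.Generated_Groups" "Jordan_Normal_Form.Matrix"
begin

definition mat_trace :: "complex mat \<Rightarrow> complex" where
  "mat_trace A = (\<Sum>i<dim_row A. A $$ (i, i))"

definition is_rep :: "('a, 'b) monoid_scheme \<Rightarrow> nat \<Rightarrow> ('a \<Rightarrow> complex mat) \<Rightarrow> bool" where
  "is_rep G n \<rho> \<longleftrightarrow>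
     (\<forall>g\<in>carrier G. \<rho> g \<in> carrier_mat n n) \<and>
     (\<forall>g\<in>carrier G. \<forall>h\<in>carrier G. \<rho> (g \<otimes>\<^bsub>G\<^esub> h) = \<rho> g * \<rho> h) \<and>
     \<rho> \<one>\<^bsub>G\<^esub> = 1\<^sub>m n"

definition irreducible_rep :: "('a, 'b) monoid_scheme \<Rightarrow> nat \<Rightarrow> ('a \<Rightarrow> complex mat) \<Rightarrow> bool" where
  "irreducible_rep G n \<rho> \<longleftrightarrow> is_rep G n \<rho> \<and> n > 0 \<and>
     (\<forall>W. W \<subseteq> carrier_vec n \<and> 0\<^sub>v n \<in> W \<and>
          (\<forall>v\<in>W. \<forall>w\<in>W. v + w \<in> W) \<and>
          (\<forall>c::complex. \<forall>v\<in>W. c \<cdot>\<^sub>v v \<in> W) \<and>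
          (\<forall>g\<in>carrier G. \<forall>v\<in>W. \<rho> g *\<^sub>v v \<in> W)
        \<longrightarrow> W = {0\<^sub>v n} \<or> W = carrier_vec n)"

definition character :: "('a, 'b) monoid_scheme \<Rightarrow> ('a \<Rightarrow> complex mat) \<Rightarrow> 'a \<Rightarrow> complex" where
  "character G \<rho> = (\<lambda>g. if g \<in> carrier G then mat_trace (\<rho> g) else 0)"

definition irr_chars :: "('a, 'b) monoid_scheme \<Rightarrow> ('a \<Rightarrow> complex) set" where
  "irr_chars G = {\<chi>. \<exists>n \<rho>. irreducible_rep G n \<rho> \<and> \<chi> = character G \<rho>}"

text \<open>Elements of the group algebra C[G] are represented by their coefficient functions
  carrier G \<rightarrow> C.  The coefficient at g of
  e_chi = chi(1)/|G| * sum_h chi(h^-1) h  is  chi(1)/|G| * chi(g^-1).\<close>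
definition central_idem :: "('a, 'b) monoid_scheme \<Rightarrow> ('a \<Rightarrow> complex) \<Rightarrow> 'a \<Rightarrow> complex" where
  "central_idem G \<chi> g = \<chi> \<one>\<^bsub>G\<^esub> / of_nat (order G) * \<chi> (inv\<^bsub>G\<^esub> g)"

definition E_deg :: "('a, 'b) monoid_scheme \<Rightarrow> nat \<Rightarrow> 'a \<Rightarrow> complex" where
  "E_deg G d g = (\<Sum>\<chi>\<in>{\<chi>\<in>irr_chars G. \<chi> \<one>\<^bsub>G\<^esub> = of_nat d}. central_idem G \<chi> g)"

end

(*
  Let C = \<Sum>\<^sub>x\<^sub>,\<^sub>y [x,y], an element of \<rat>[G'] that is central in \<complex>[G]. By Schur's lemma and the
  orthogonality relations, e\<^sub>\<chi> C = (|G| / \<chi>(1))\<^sup>2 e\<^sub>\<chi>, and these scalars separate the degrees.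
  Since the e\<^sub>\<chi> sum to 1, Lagrange interpolation writes E\<^sub>d as a polynomial in C with
  rational coefficients, so E\<^sub>d is rational and supported on G'. On \<complex>[G'], left multiplication
  by E\<^sub>d g (g \<in> G') is periodic, so its eigenvalues are 0 or roots of unity; its trace
  |G'| E\<^sub>d(g) is therefore a rational algebraic integer, i.e. an integer.
*)

theory Submission
  imports Defs "Jordan_Normal_Form.Schur_Decomposition"
begin

lemma lagrange_coeff_prod_list:
  fixes x t :: "'a::field"
  assumes dist: "distinct as" and as: "set as = S - {t}" and x: "x \<in> S"
  shows "(\<Prod>a\<leftarrow>as. (x - a) / (t - a)) = (if x = t then 1 else 0)"
proof -
  have prod: "(\<Prod>a\<leftarrow>as. (x - a) / (t - a)) = (\<Prod>a\<in>set as. (x - a) / (t - a))"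
    by (simp add: prod.distinct_set_conv_list[OF dist])
  show ?thesis
  proof (cases "x = t")
    case True
    have "t - a \<noteq> 0" if "a \<in> set as" for a
      using that as by (simp add: eq_commute[of t a])
    then have "(x - a) / (t - a) = 1" if "a \<in> set as" for a
      using that True by simp
    then show ?thesis unfolding prod using True by (simp add: prod.neutral)
  next
    case False
    then have "x \<in> set as" using as x by simp
    then have "(\<Prod>a\<in>set as. (x - a) / (t - a)) = 0"
      by (intro prod_zero[OF finite_set bexI[of _ x]]) simp_all
    then show ?thesis unfolding prod using False by simp
  qed
qed

lemma if_zero_mult [simp]: "(if P then x else 0) * y = (if P then x * y else (0::'a::mult_zero))"
  by simp

lemma mult_if_zero [simp]: "y * (if P then x else 0) = (if P then y * x else (0::'a::mult_zero))"
  by simp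

lemma index_mult_mat_sum:
  assumes "A \<in> carrier_mat n k" "B \<in> carrier_mat k m" "i < n" "j < m"
  shows "(A * B) $$ (i,j) = (\<Sum>c<k. A $$ (i,c) * B $$ (c,j))"
  using assms by (simp add: index_mult_mat scalar_prod_def atLeast0LessThan)

lemma mat_trace_mult_comm:
  assumes A: "A \<in> carrier_mat n m" and B: "B \<in> carrier_mat m n"
  shows "mat_trace (A * B) = mat_trace (B * A)"
proof -
  have "mat_trace (A * B) = (\<Sum>i<n. \<Sum>k<m. A $$ (i,k) * B $$ (k,i))"
    unfolding mat_trace_def using A B
    by (auto simp: scalar_prod_def atLeast0LessThan intro!: sum.cong)
  also have "\<dots> = (\<Sum>k<m. \<Sum>i<n. B $$ (k,i) * A $$ (i,k))"
    by (subst sum.swap) (simp add: mult.commute)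
  also have "\<dots> = mat_trace (B * A)"
    unfolding mat_trace_def using A B
    by (auto simp: scalar_prod_def atLeast0LessThan intro!: sum.cong)
  finally show ?thesis .
qed

lemma mat_trace_one [simp]: "mat_trace (1\<^sub>m n) = of_nat n"
  unfolding mat_trace_def by simp

lemma mat_trace_smult: "A \<in> carrier_mat n n \<Longrightarrow> mat_trace (c \<cdot>\<^sub>m A) = c * mat_trace A"
  unfolding mat_trace_def by (simp add: sum_distrib_left)

lemma mat_trace_similar:
  assumes "similar_mat A B"
  shows "mat_trace A = mat_trace B"
proof -
  obtain n P Q where P: "P \<in> carrier_mat n n" and Q: "Q \<in> carrier_mat n n"
    and B: "B \<in> carrier_mat n n" and QP: "Q * P = 1\<^sub>m n" and A: "A = P * B * Q"
    using similar_matD[OF assms] by blast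
  have "mat_trace A = mat_trace (P * (B * Q))" using A P B Q by (simp add: assoc_mult_mat)
  also have "\<dots> = mat_trace ((B * Q) * P)" using P B Q by (intro mat_trace_mult_comm[of _ n n]) auto
  also have "(B * Q) * P = B" using B Q P QP by (simp add: assoc_mult_mat[OF B Q P])
  finally show ?thesis .
qed

lemma mat_trace_eq_sum_eigenvalues:
  fixes A :: "complex mat"
  assumes A: "A \<in> carrier_mat n n"
  obtains \<mu> where "mat_trace A = (\<Sum>i<n. \<mu> i)" and "\<And>i. i < n \<Longrightarrow> eigenvalue A (\<mu> i)"
proof -
  obtain es where es: "char_poly A = (\<Prod>a\<leftarrow>es. [:- a, 1:])"
    using char_poly_factorized[OF A] by blast
  define T where "T = schur_upper_triangular A es"
  have T: "T \<in> carrier_mat n n" and ut: "upper_triangular T" and sim: "similar_mat A T"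
    using schur_upper_triangular[OF A es] unfolding T_def by auto
  have "mat_trace A = (\<Sum>i<n. T $$ (i,i))"
    using mat_trace_similar[OF sim] T unfolding mat_trace_def by simp
  moreover have "eigenvalue A (T $$ (i,i))" if i: "i < n" for i
  proof -
    have "T $$ (i,i) \<in> set (diag_mat T)" using T i unfolding diag_mat_def by auto
    then have "poly (char_poly T) (T $$ (i,i)) = 0"
      by (simp add: char_poly_upper_triangular[OF T ut] poly_prod_list prod_list_zero_iff)
    then show ?thesis using eigenvalue_root_char_poly[OF A] char_poly_similar[OF sim] by simp
  qed
  ultimately show thesis using that by blast
qed

lemma eq_mat_by_mult_vec:
  fixes A B :: "'a::comm_ring_1 mat"
  assumes A: "A \<in> carrier_mat n m" and B: "B \<in> carrier_mat n m"
    and AB: "\<And>v. v \<in> carrier_vec m \<Longrightarrow> A *\<^sub>v v = B *\<^sub>v v"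
  shows "A = B"
proof (rule eq_matI)
  fix i j assume i: "i < dim_row B" and j: "j < dim_col B"
  have "A $$ (i,j) = (A *\<^sub>v unit_vec m j) $ i" using A B i j by (simp add: mult_mat_vec_def)
  also have "\<dots> = (B *\<^sub>v unit_vec m j) $ i" using AB by simp
  also have "\<dots> = B $$ (i,j)" using A B i j by (simp add: mult_mat_vec_def)
  finally show "A $$ (i,j) = B $$ (i,j)" .
qed (use A B in auto)

lemma eq_zero_mat_by_mult_vec:
  fixes A :: "'a::comm_ring_1 mat"
  assumes A: "A \<in> carrier_mat n m" and "\<And>v. v \<in> carrier_vec m \<Longrightarrow> A *\<^sub>v v = 0\<^sub>v n"
  shows "A = 0\<^sub>m n m"
  using assms by (intro eq_mat_by_mult_vec[OF A]) auto

lemma mult_mat_vec_zero [simp]: "A \<in> carrier_mat n m \<Longrightarrow> A *\<^sub>v 0\<^sub>v m = 0\<^sub>v n"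
  by (intro eq_vecI) auto

lemma smult_vec_zero [simp]: "c \<cdot>\<^sub>v 0\<^sub>v n = (0\<^sub>v n :: 'a::mult_zero vec)"
  by (intro eq_vecI) auto

lemma smult_one_mat_mult_vec:
  "v \<in> carrier_vec n \<Longrightarrow> (c \<cdot>\<^sub>m 1\<^sub>m n) *\<^sub>v v = c \<cdot>\<^sub>v (v :: 'a::comm_ring_1 vec)"
  by (intro eq_vecI) (auto simp: smult_scalar_prod_distrib[of _ n])

lemma eq_vec_of_diff_zero:
  fixes v w :: "'a::ab_group_add vec"
  assumes v: "v \<in> carrier_vec n" and w: "w \<in> carrier_vec n" and vw: "v - w = 0\<^sub>v n"
  shows "v = w"
proof -
  have "v $ i = w $ i" if i: "i < n" for i
    using arg_cong[OF vw, of "\<lambda>x. x $ i"] v w i by (simp add: carrier_vecD)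
  then show ?thesis using v w by (intro eq_vecI) auto
qed

definition subspace_vec :: "nat \<Rightarrow> 'a::field vec set \<Rightarrow> bool" where
  "subspace_vec n W \<longleftrightarrow> W \<subseteq> carrier_vec n \<and> 0\<^sub>v n \<in> W \<and>
     (\<forall>v\<in>W. \<forall>w\<in>W. v + w \<in> W) \<and> (\<forall>c. \<forall>v\<in>W. c \<cdot>\<^sub>v v \<in> W)"

lemma subspace_vecI:
  "W \<subseteq> carrier_vec n \<Longrightarrow> 0\<^sub>v n \<in> W \<Longrightarrow> (\<And>v w. v \<in> W \<Longrightarrow> w \<in> W \<Longrightarrow> v + w \<in> W) \<Longrightarrow>
   (\<And>c v. v \<in> W \<Longrightarrow> c \<cdot>\<^sub>v v \<in> W) \<Longrightarrow> subspace_vec n W"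
  unfolding subspace_vec_def by blast

lemma subspace_vecD:
  assumes "subspace_vec n W"
  shows "W \<subseteq> carrier_vec n" "0\<^sub>v n \<in> W" "\<And>v w. v \<in> W \<Longrightarrow> w \<in> W \<Longrightarrow> v + w \<in> W"
    "\<And>c v. v \<in> W \<Longrightarrow> c \<cdot>\<^sub>v v \<in> W"
  using assms unfolding subspace_vec_def by blast+

lemma subspace_vec_kernel:
  assumes T: "T \<in> carrier_mat n m"
  shows "subspace_vec m {v \<in> carrier_vec m. T *\<^sub>v v = 0\<^sub>v n}"
proof (intro subspace_vecI)
  fix c v assume "v \<in> {v \<in> carrier_vec m. T *\<^sub>v v = 0\<^sub>v n}"
  then show "c \<cdot>\<^sub>v v \<in> {v \<in> carrier_vec m. T *\<^sub>v v = 0\<^sub>v n}"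
    using T by (auto simp: mult_mat_vec)
qed (use T in \<open>auto simp: mult_add_distrib_mat_vec\<close>)

lemma subspace_vec_image:
  assumes T: "T \<in> carrier_mat n m"
  shows "subspace_vec n {T *\<^sub>v v | v. v \<in> carrier_vec m}"
proof (intro subspace_vecI)
  show "0\<^sub>v n \<in> {T *\<^sub>v v | v. v \<in> carrier_vec m}"
    using T by (auto intro!: exI[of _ "0\<^sub>v m"])
next
  fix x y assume "x \<in> {T *\<^sub>v v | v. v \<in> carrier_vec m}" "y \<in> {T *\<^sub>v v | v. v \<in> carrier_vec m}"
  then obtain a b where "a \<in> carrier_vec m" "b \<in> carrier_vec m" "x = T *\<^sub>v a" "y = T *\<^sub>v b" by auto
  then show "x + y \<in> {T *\<^sub>v v | v. v \<in> carrier_vec m}"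
    using T by (auto simp: mult_add_distrib_mat_vec intro!: exI[of _ "a + b"])
next
  fix c x assume "x \<in> {T *\<^sub>v v | v. v \<in> carrier_vec m}"
  then obtain a where "a \<in> carrier_vec m" "x = T *\<^sub>v a" by auto
  then show "c \<cdot>\<^sub>v x \<in> {T *\<^sub>v v | v. v \<in> carrier_vec m}"
    using T by (auto simp: mult_mat_vec intro!: exI[of _ "c \<cdot>\<^sub>v a"])
qed (use T in auto)

definition injective_mat :: "'a::comm_ring_1 mat \<Rightarrow> bool" where
  "injective_mat B \<longleftrightarrow>
     (\<forall>v\<in>carrier_vec (dim_col B). B *\<^sub>v v = 0\<^sub>v (dim_row B) \<longrightarrow> v = 0\<^sub>v (dim_col B))"

lemma injective_matI:
  "B \<in> carrier_mat m k \<Longrightarrow> (\<And>v. v \<in> carrier_vec k \<Longrightarrow> B *\<^sub>v v = 0\<^sub>v m \<Longrightarrow> v = 0\<^sub>v k) \<Longrightarrow>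
   injective_mat B"
  unfolding injective_mat_def by auto

lemma injective_matD:
  "injective_mat B \<Longrightarrow> B \<in> carrier_mat m k \<Longrightarrow> v \<in> carrier_vec k \<Longrightarrow> B *\<^sub>v v = 0\<^sub>v m \<Longrightarrow> v = 0\<^sub>v k"
  unfolding injective_mat_def by auto

lemma mult_mat_fixed_cols:
  assumes P: "P \<in> carrier_mat m m" and B: "B \<in> carrier_mat m k"
    and fixed: "\<And>j. j < k \<Longrightarrow> P *\<^sub>v col B j = col B j"
  shows "P * B = B"
proof (rule eq_matI)
  fix i j assume "i < dim_row B" "j < dim_col B"
  then have i: "i < m" and j: "j < k" using B by auto
  have "(P * B) $$ (i,j) = (P *\<^sub>v col B j) $ i" using P B i j by (simp add: index_mult_mat)
  then show "(P * B) $$ (i,j) = B $$ (i,j)" using fixed[OF j] B i j by simp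
qed (use P B in simp_all)

lemma mat_factor_through_image:
  fixes B :: "'a::comm_ring_1 mat"
  assumes B: "B \<in> carrier_mat m k" and A: "A \<in> carrier_mat m m"
    and img: "\<And>j. j < k \<Longrightarrow> \<exists>c\<in>carrier_vec k. B *\<^sub>v c = A *\<^sub>v col B j"
  obtains R where "R \<in> carrier_mat k k" "B * R = A * B"
proof -
  define c where "c j = (SOME c. c \<in> carrier_vec k \<and> B *\<^sub>v c = A *\<^sub>v col B j)" for j
  have c: "c j \<in> carrier_vec k \<and> B *\<^sub>v c j = A *\<^sub>v col B j" if j: "j < k" for j
  proof -
    have "\<exists>c. c \<in> carrier_vec k \<and> B *\<^sub>v c = A *\<^sub>v col B j" using img[OF j] by blast
    then show ?thesis unfolding c_def by (rule someI_ex)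
  qed
  define R where "R = mat k k (\<lambda>(i,j). c j $ i)"
  have R: "R \<in> carrier_mat k k" unfolding R_def by simp
  have "B * R = A * B"
  proof (rule eq_matI)
    fix i j assume "i < dim_row (A * B)" "j < dim_col (A * B)"
    then have i: "i < m" and j: "j < k" using A B by auto
    have "col R j = c j"
      using conjunct1[OF c[OF j]] j unfolding R_def by (intro eq_vecI) (simp_all add: carrier_vecD)
    then have "(B * R) $$ (i,j) = (B *\<^sub>v c j) $ i"
      using B R i j by (simp add: index_mult_mat)
    also have "\<dots> = (A * B) $$ (i,j)" using c[OF j] A B i j by (simp add: index_mult_mat)
    finally show "(B * R) $$ (i,j) = (A * B) $$ (i,j)" .
  qed (use A B R in simp_all)
  with R show thesis by (rule that)
qed

lemma injective_mat_cancel_left: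
  fixes B :: "'a::comm_ring_1 mat"
  assumes B: "B \<in> carrier_mat m k" and inj: "injective_mat B"
    and X: "X \<in> carrier_mat k n" and Y: "Y \<in> carrier_mat k n" and BXY: "B * X = B * Y"
  shows "X = Y"
proof (rule eq_mat_by_mult_vec[OF X Y])
  fix v :: "'a vec" assume v: "v \<in> carrier_vec n"
  have Xv: "X *\<^sub>v v \<in> carrier_vec k" and Yv: "Y *\<^sub>v v \<in> carrier_vec k" using X Y v by auto
  have "B *\<^sub>v (X *\<^sub>v v) = B *\<^sub>v (Y *\<^sub>v v)"
    using BXY by (simp only: assoc_mult_mat_vec[OF B X v, symmetric] assoc_mult_mat_vec[OF B Y v, symmetric])
  then have "B *\<^sub>v (X *\<^sub>v v - Y *\<^sub>v v) = 0\<^sub>v m"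
    using B Xv Yv by (simp add: mult_minus_distrib_mat_vec)
  then have "X *\<^sub>v v - Y *\<^sub>v v = 0\<^sub>v k" using injective_matD[OF inj B] Xv Yv by simp
  then show "X *\<^sub>v v = Y *\<^sub>v v" using Xv Yv by (rule eq_vec_of_diff_zero[rotated 2])
qed

text \<open>Padding an injective \<open>m \<times> k\<close> matrix with \<open>m < k\<close> by zero rows gives a
  singular square matrix with the same kernel.\<close>

lemma injective_mat_dim_le:
  fixes B :: "'a::field mat"
  assumes B: "B \<in> carrier_mat m k" and inj: "injective_mat B"
  shows "k \<le> m"
proof (rule ccontr)
  assume "\<not> k \<le> m"
  then have mk: "m < k" by simp
  define c where "c = (\<lambda>i. if i < m then row B i else 0\<^sub>v k)"
  have c: "c \<in> {0..<k} \<rightarrow> carrier_vec k" unfolding c_def using B by auto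
  define B' where "B' = mat\<^sub>r k k (\<lambda>i. if i = m then 0\<^sub>v k else c i)"
  have B': "B' \<in> carrier_mat k k" unfolding B'_def by auto
  have "det B' = 0" unfolding B'_def by (rule det_row_0[OF mk c])
  then obtain v where v: "v \<in> carrier_vec k" "v \<noteq> 0\<^sub>v k" "B' *\<^sub>v v = 0\<^sub>v k"
    using det_0_iff_vec_prod_zero_field[OF B'] by blast
  have "B *\<^sub>v v = 0\<^sub>v m"
  proof (rule eq_vecI)
    fix i assume "i < dim_vec (0\<^sub>v m)"
    then have i: "i < m" and ik: "i < k" using mk by auto
    have "(B *\<^sub>v v) $ i = row B' i \<bullet> v" unfolding B'_def c_def using B i ik by simp
    also have "\<dots> = (B' *\<^sub>v v) $ i" using B' ik by simp
    finally show "(B *\<^sub>v v) $ i = 0\<^sub>v m $ i" using v ik i by simp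
  qed (use B in simp)
  with injective_matD[OF inj B v(1)] v(2) show False by blast
qed

lemma mult_mat_vec_in_subspace:
  fixes B :: "'a::field mat"
  assumes B: "B \<in> carrier_mat m k" and W: "subspace_vec m W"
    and cols: "\<And>j. j < k \<Longrightarrow> col B j \<in> W" and v: "v \<in> carrier_vec k"
  shows "B *\<^sub>v v \<in> W"
proof -
  define p where "p = (\<lambda>j. vec m (\<lambda>i. \<Sum>l<j. B $$ (i,l) * v $ l))"
  have "p j \<in> W" if "j \<le> k" for j
    using that
  proof (induction j)
    case 0
    have "p 0 = 0\<^sub>v m" unfolding p_def by auto
    then show ?case using subspace_vecD(2)[OF W] by simp
  next
    case (Suc j)
    have "p (Suc j) = p j + v $ j \<cdot>\<^sub>v col B j"
      unfolding p_def using B Suc.prems by (intro eq_vecI) (auto simp: mult.commute)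
    then show ?case using Suc subspace_vecD(3,4)[OF W] cols by simp
  qed
  moreover have "p k = B *\<^sub>v v"
    unfolding p_def using B v by (intro eq_vecI) (auto simp: scalar_prod_def atLeast0LessThan mult.commute)
  ultimately show ?thesis by (metis order_refl)
qed

lemma injective_mat_append_col:
  fixes B :: "'a::field mat"
  assumes B: "B \<in> carrier_mat m k" and inj: "injective_mat B"
    and w: "w \<in> carrier_vec m" and w_notin: "\<And>v. v \<in> carrier_vec k \<Longrightarrow> B *\<^sub>v v \<noteq> w"
  defines "B' \<equiv> mat m (Suc k) (\<lambda>(i,j). if j < k then B $$ (i,j) else w $ i)"
  shows "B' \<in> carrier_mat m (Suc k)" and "injective_mat B'"
    and "\<And>j. j < Suc k \<Longrightarrow> col B' j = (if j < k then col B j else w)"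
proof -
  show B': "B' \<in> carrier_mat m (Suc k)" unfolding B'_def by simp
  show "\<And>j. j < Suc k \<Longrightarrow> col B' j = (if j < k then col B j else w)"
    unfolding B'_def using B w by (intro eq_vecI) auto
  show "injective_mat B'"
  proof (rule injective_matI[OF B'])
    fix v :: "'a vec" assume v: "v \<in> carrier_vec (Suc k)" and z: "B' *\<^sub>v v = 0\<^sub>v m"
    define u where "u = vec k (\<lambda>j. v $ j)"
    define a where "a = v $ k"
    have u: "u \<in> carrier_vec k" unfolding u_def by simp
    have Bu: "(B *\<^sub>v u) $ i + a * w $ i = 0" if i: "i < m" for i
    proof -
      have "(B' *\<^sub>v v) $ i = (\<Sum>l<Suc k. B' $$ (i,l) * v $ l)"
        using B' v i by (simp add: scalar_prod_def atLeast0LessThan)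
      also have "\<dots> = (B *\<^sub>v u) $ i + a * w $ i"
        unfolding B'_def a_def u_def using B i by (simp add: scalar_prod_def atLeast0LessThan mult.commute)
      finally show ?thesis using z i by simp
    qed
    have a0: "a = 0"
    proof (rule ccontr)
      assume a: "a \<noteq> 0"
      have "B *\<^sub>v ((- 1 / a) \<cdot>\<^sub>v u) = w"
      proof (rule eq_vecI)
        fix i assume "i < dim_vec w"
        then have i: "i < m" using w by simp
        then have "(B *\<^sub>v u) $ i = - a * w $ i" using Bu[OF i] by (simp add: eq_neg_iff_add_eq_0)
        then show "(B *\<^sub>v ((- 1 / a) \<cdot>\<^sub>v u)) $ i = w $ i"
          using B u i a by (simp add: mult_mat_vec)
      qed (use B w in simp)
      with w_notin u show False by simp
    qed
    have "B *\<^sub>v u = 0\<^sub>v m" using Bu a0 B by (intro eq_vecI) auto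
    then have "u = 0\<^sub>v k" using injective_matD[OF inj B u] by simp
    then have "u $ j = 0" if "j < k" for j using that by simp
    then show "v = 0\<^sub>v (Suc k)"
      using v a0 unfolding u_def a_def by (intro eq_vecI) (auto simp: less_Suc_eq)
  qed
qed

text \<open>The basis is an injective matrix with columns in \<open>W\<close> and as many columns as possible.\<close>

lemma subspace_basis_mat:
  fixes W :: "'a::field vec set"
  assumes W: "subspace_vec m W"
  obtains k B where "B \<in> carrier_mat m k" "injective_mat B" "\<And>j. j < k \<Longrightarrow> col B j \<in> W"
    "\<And>w. w \<in> W \<Longrightarrow> \<exists>v\<in>carrier_vec k. B *\<^sub>v v = w"
    "W \<noteq> carrier_vec m \<Longrightarrow> k < m" "W \<noteq> {0\<^sub>v m} \<Longrightarrow> 0 < k"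
proof -
  define P where "P = (\<lambda>k. \<exists>B. B \<in> carrier_mat m k \<and> injective_mat B \<and> (\<forall>j<k. col B j \<in> W))"
  have P0: "P 0" unfolding P_def by (rule exI[of _ "0\<^sub>m m 0"]) (auto simp: injective_mat_def)
  have bound: "\<And>k. P k \<Longrightarrow> k \<le> m" unfolding P_def using injective_mat_dim_le by blast
  define K where "K = (GREATEST k. P k)"
  have "P K" unfolding K_def by (rule GreatestI_nat[of P 0 m, OF P0 bound])
  then obtain B where B: "B \<in> carrier_mat m K" and inj: "injective_mat B" and cols: "\<forall>j<K. col B j \<in> W"
    unfolding P_def by blast
  have maxK: "\<And>k. P k \<Longrightarrow> k \<le> K" unfolding K_def by (rule Greatest_le_nat[of P _ m, OF _ bound])
  have in_W: "B *\<^sub>v v \<in> W" if "v \<in> carrier_vec K" for v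
    using mult_mat_vec_in_subspace[OF B W] cols that by blast
  have span: "\<exists>v\<in>carrier_vec K. B *\<^sub>v v = w" if w: "w \<in> W" for w
  proof (rule ccontr)
    assume "\<not> ?thesis"
    then have "\<And>v. v \<in> carrier_vec K \<Longrightarrow> B *\<^sub>v v \<noteq> w" by blast
    note B' = injective_mat_append_col[OF B inj _ this]
    have "w \<in> carrier_vec m" using w subspace_vecD(1)[OF W] by blast
    with B' have "P (Suc K)" using cols w unfolding P_def by (intro exI[of _ "mat m (Suc K) _"]) auto
    then show False using maxK by fastforce
  qed
  have "K < m" if "W \<noteq> carrier_vec m"
  proof -
    obtain w where w: "w \<in> carrier_vec m" "w \<notin> W" using \<open>W \<noteq> carrier_vec m\<close> subspace_vecD(1)[OF W] by blast
    then have "\<And>v. v \<in> carrier_vec K \<Longrightarrow> B *\<^sub>v v \<noteq> w" using in_W by blast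
    then have "Suc K \<le> m" using injective_mat_append_col[OF B inj w(1)] injective_mat_dim_le by blast
    then show ?thesis by simp
  qed
  moreover have "0 < K" if "W \<noteq> {0\<^sub>v m}"
  proof (rule ccontr)
    assume "\<not> 0 < K"
    then have "w = 0\<^sub>v m" if "w \<in> W" for w
      using span[OF that] B by (auto simp: mult_mat_vec_def scalar_prod_def)
    then show False using \<open>W \<noteq> {0\<^sub>v m}\<close> subspace_vecD(2)[OF W] by blast
  qed
  ultimately show thesis using that[OF B inj] cols span by blast
qed

lemma injective_mat_surjective_inverse:
  fixes T :: "'a::field mat"
  assumes T: "T \<in> carrier_mat n m" and inj: "injective_mat T"
    and surj: "\<And>w. w \<in> carrier_vec n \<Longrightarrow> \<exists>v\<in>carrier_vec m. T *\<^sub>v v = w"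
  obtains S where "S \<in> carrier_mat m n" "T * S = 1\<^sub>m n" "S * T = 1\<^sub>m m"
proof -
  define s where "s = (\<lambda>j. SOME v. v \<in> carrier_vec m \<and> T *\<^sub>v v = unit_vec n j)"
  have s_carrier: "s j \<in> carrier_vec m" and T_s: "T *\<^sub>v s j = unit_vec n j" if "j < n" for j
  proof -
    have "\<exists>v. v \<in> carrier_vec m \<and> T *\<^sub>v v = unit_vec n j" using surj[of "unit_vec n j"] by auto
    then have "s j \<in> carrier_vec m \<and> T *\<^sub>v s j = unit_vec n j" unfolding s_def by (rule someI_ex)
    then show "s j \<in> carrier_vec m" "T *\<^sub>v s j = unit_vec n j" by auto
  qed
  define S where "S = mat m n (\<lambda>(i,j). s j $ i)"
  have S: "S \<in> carrier_mat m n" unfolding S_def by simp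
  have col_S: "col S j = s j" if j: "j < n" for j
  proof (rule eq_vecI)
    fix i assume "i < dim_vec (s j)"
    then show "col S j $ i = s j $ i" using s_carrier[OF j] j unfolding S_def by simp
  next
    show "dim_vec (col S j) = dim_vec (s j)" using s_carrier[OF j] S by simp
  qed
  have TS: "T * S = 1\<^sub>m n"
  proof (rule eq_matI)
    fix i j assume "i < dim_row (1\<^sub>m n)" "j < dim_col (1\<^sub>m n)"
    then have i: "i < n" and j: "j < n" by auto
    have "(T * S) $$ (i,j) = (T *\<^sub>v s j) $ i" using T S i j col_S[OF j] by (simp add: index_mult_mat)
    then show "(T * S) $$ (i,j) = 1\<^sub>m n $$ (i,j)" using T_s[OF j] i j by simp
  qed (use T S in simp_all)
  have "T * (S * T) = T * 1\<^sub>m m"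
    using T S TS by (simp add: assoc_mult_mat[OF T S T, symmetric])
  then have "S * T = 1\<^sub>m m"
    by (rule injective_mat_cancel_left[OF T inj mult_carrier_mat[OF S T] one_carrier_mat])
  with S TS show thesis using that by blast
qed

section \<open>Representations and Schur's lemma\<close>

lemma rep_carrier: "is_rep G n \<rho> \<Longrightarrow> g \<in> carrier G \<Longrightarrow> \<rho> g \<in> carrier_mat n n"
  unfolding is_rep_def by auto

lemma rep_mult: "is_rep G n \<rho> \<Longrightarrow> g \<in> carrier G \<Longrightarrow> h \<in> carrier G \<Longrightarrow> \<rho> (g \<otimes>\<^bsub>G\<^esub> h) = \<rho> g * \<rho> h"
  unfolding is_rep_def by auto

lemma rep_one: "is_rep G n \<rho> \<Longrightarrow> \<rho> \<one>\<^bsub>G\<^esub> = 1\<^sub>m n"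
  unfolding is_rep_def by auto

lemma index_rep_mult:
  assumes \<rho>: "is_rep G n \<rho>" and x: "x \<in> carrier G" and y: "y \<in> carrier G" and i: "i < n" and j: "j < n"
  shows "\<rho> (x \<otimes>\<^bsub>G\<^esub> y) $$ (i,j) = (\<Sum>c<n. \<rho> x $$ (i,c) * \<rho> y $$ (c,j))"
  using rep_mult[OF \<rho> x y] index_mult_mat_sum[OF rep_carrier[OF \<rho> x] rep_carrier[OF \<rho> y] i j] by simp

lemma character_eq_sum_diag:
  assumes "is_rep G n \<rho>" "g \<in> carrier G"
  shows "character G \<rho> g = (\<Sum>i<n. \<rho> g $$ (i,i))"
  unfolding character_def mat_trace_def using rep_carrier[OF assms] assms(2) by (simp add: carrier_matD)

definition invariant_subspace ::
    "('a, 'b) monoid_scheme \<Rightarrow> nat \<Rightarrow> ('a \<Rightarrow> complex mat) \<Rightarrow> complex vec set \<Rightarrow> bool" where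
  "invariant_subspace G n \<rho> W \<longleftrightarrow> subspace_vec n W \<and> (\<forall>g\<in>carrier G. \<forall>v\<in>W. \<rho> g *\<^sub>v v \<in> W)"

lemma irreducible_rep_iff:
  "irreducible_rep G n \<rho> \<longleftrightarrow> is_rep G n \<rho> \<and> 0 < n \<and>
     (\<forall>W. invariant_subspace G n \<rho> W \<longrightarrow> W = {0\<^sub>v n} \<or> W = carrier_vec n)"
  unfolding irreducible_rep_def invariant_subspace_def subspace_vec_def by blast

lemma irreducible_repD:
  assumes "irreducible_rep G n \<rho>"
  shows "is_rep G n \<rho>" "0 < n" "\<And>W. invariant_subspace G n \<rho> W \<Longrightarrow> W = {0\<^sub>v n} \<or> W = carrier_vec n"
  using assms unfolding irreducible_rep_iff by blast+

lemma not_irreducible_repE: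
  assumes "is_rep G n \<rho>" "0 < n" "\<not> irreducible_rep G n \<rho>"
  obtains W where "invariant_subspace G n \<rho> W" "W \<noteq> {0\<^sub>v n}" "W \<noteq> carrier_vec n"
  using assms unfolding irreducible_rep_iff by blast

lemma invariant_subspace_kernel:
  assumes \<rho>: "is_rep G m \<rho>" and \<sigma>: "is_rep G n \<sigma>" and T: "T \<in> carrier_mat n m"
    and T_comm: "\<And>g. g \<in> carrier G \<Longrightarrow> T * \<rho> g = \<sigma> g * T"
  shows "invariant_subspace G m \<rho> {v \<in> carrier_vec m. T *\<^sub>v v = 0\<^sub>v n}"
  unfolding invariant_subspace_def
proof (intro conjI subspace_vec_kernel[OF T] ballI)
  fix g v assume g: "g \<in> carrier G" and v: "v \<in> {v \<in> carrier_vec m. T *\<^sub>v v = 0\<^sub>v n}"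
  have \<rho>g: "\<rho> g \<in> carrier_mat m m" and \<sigma>g: "\<sigma> g \<in> carrier_mat n n"
    using rep_carrier[OF \<rho> g] rep_carrier[OF \<sigma> g] .
  have "T *\<^sub>v (\<rho> g *\<^sub>v v) = (T * \<rho> g) *\<^sub>v v" using T \<rho>g v by simp
  also have "\<dots> = \<sigma> g *\<^sub>v (T *\<^sub>v v)" using T_comm[OF g] T \<sigma>g v by simp
  also have "\<dots> = 0\<^sub>v n" using \<sigma>g v by simp
  finally show "\<rho> g *\<^sub>v v \<in> {v \<in> carrier_vec m. T *\<^sub>v v = 0\<^sub>v n}" using \<rho>g v by simp
qed

lemma invariant_subspace_image:
  assumes \<rho>: "is_rep G m \<rho>" and \<sigma>: "is_rep G n \<sigma>" and T: "T \<in> carrier_mat n m"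
    and T_comm: "\<And>g. g \<in> carrier G \<Longrightarrow> T * \<rho> g = \<sigma> g * T"
  shows "invariant_subspace G n \<sigma> {T *\<^sub>v v | v. v \<in> carrier_vec m}"
  unfolding invariant_subspace_def
proof (intro conjI subspace_vec_image[OF T] ballI)
  fix g x assume g: "g \<in> carrier G" and "x \<in> {T *\<^sub>v v | v. v \<in> carrier_vec m}"
  then obtain v where v: "v \<in> carrier_vec m" and x: "x = T *\<^sub>v v" by blast
  have \<rho>g: "\<rho> g \<in> carrier_mat m m" and \<sigma>g: "\<sigma> g \<in> carrier_mat n n"
    using rep_carrier[OF \<rho> g] rep_carrier[OF \<sigma> g] .
  have "\<sigma> g *\<^sub>v x = (\<sigma> g * T) *\<^sub>v v" using T \<sigma>g v x by simp
  also have "\<dots> = T *\<^sub>v (\<rho> g *\<^sub>v v)" using T_comm[OF g, symmetric] T \<rho>g v by simp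
  finally have "\<sigma> g *\<^sub>v x = T *\<^sub>v (\<rho> g *\<^sub>v v)" .
  moreover have "\<rho> g *\<^sub>v v \<in> carrier_vec m" using \<rho>g v by simp
  ultimately show "\<sigma> g *\<^sub>v x \<in> {T *\<^sub>v v | v. v \<in> carrier_vec m}" by blast
qed

lemma invariant_subspace_eigenspace:
  assumes \<rho>: "is_rep G n \<rho>" and M: "M \<in> carrier_mat n n"
    and M_comm: "\<And>g. g \<in> carrier G \<Longrightarrow> M * \<rho> g = \<rho> g * M"
  shows "invariant_subspace G n \<rho> {v \<in> carrier_vec n. M *\<^sub>v v = \<mu> \<cdot>\<^sub>v v}"
  unfolding invariant_subspace_def
proof (intro conjI subspace_vecI ballI)
  fix v w assume "v \<in> {v \<in> carrier_vec n. M *\<^sub>v v = \<mu> \<cdot>\<^sub>v v}" "w \<in> {v \<in> carrier_vec n. M *\<^sub>v v = \<mu> \<cdot>\<^sub>v v}"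
  then show "v + w \<in> {v \<in> carrier_vec n. M *\<^sub>v v = \<mu> \<cdot>\<^sub>v v}"
    using M by (simp add: mult_add_distrib_mat_vec smult_add_distrib_vec[of _ n])
next
  fix c v assume "v \<in> {v \<in> carrier_vec n. M *\<^sub>v v = \<mu> \<cdot>\<^sub>v v}"
  then show "c \<cdot>\<^sub>v v \<in> {v \<in> carrier_vec n. M *\<^sub>v v = \<mu> \<cdot>\<^sub>v v}"
    using M by (simp add: mult_mat_vec smult_smult_assoc mult.commute)
next
  fix g v assume g: "g \<in> carrier G" and v: "v \<in> {v \<in> carrier_vec n. M *\<^sub>v v = \<mu> \<cdot>\<^sub>v v}"
  have \<rho>g: "\<rho> g \<in> carrier_mat n n" using rep_carrier[OF \<rho> g] .
  have "M *\<^sub>v (\<rho> g *\<^sub>v v) = (M * \<rho> g) *\<^sub>v v" using M \<rho>g v by simp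
  also have "\<dots> = \<rho> g *\<^sub>v (M *\<^sub>v v)" using M_comm[OF g] M \<rho>g v by simp
  also have "\<dots> = \<mu> \<cdot>\<^sub>v (\<rho> g *\<^sub>v v)" using \<rho>g v by (simp add: mult_mat_vec)
  finally show "\<rho> g *\<^sub>v v \<in> {v \<in> carrier_vec n. M *\<^sub>v v = \<mu> \<cdot>\<^sub>v v}" using \<rho>g v by simp
qed (use M in simp_all)

lemma complex_mat_has_eigenvalue:
  fixes M :: "complex mat"
  assumes M: "M \<in> carrier_mat n n" and n: "0 < n"
  obtains \<mu> where "eigenvalue M \<mu>"
proof -
  obtain as where cp: "char_poly M = (\<Prod>a\<leftarrow>as. [:- a, 1:])" and len: "length as = n"
    using char_poly_factorized[OF M] by blast
  obtain a as' where "as = a # as'" using len n by (cases as) auto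
  then have "poly (char_poly M) a = 0" unfolding cp by simp
  then show thesis using that eigenvalue_root_char_poly[OF M] by blast
qed

lemma schur_scalar:
  assumes irr: "irreducible_rep G n \<rho>" and M: "M \<in> carrier_mat n n"
    and M_comm: "\<And>g. g \<in> carrier G \<Longrightarrow> M * \<rho> g = \<rho> g * M"
  obtains c where "M = c \<cdot>\<^sub>m 1\<^sub>m n"
proof -
  note \<rho> = irreducible_repD(1)[OF irr]
  obtain \<mu> where "eigenvalue M \<mu>"
    using complex_mat_has_eigenvalue[OF M irreducible_repD(2)[OF irr]] by blast
  then obtain v where v: "v \<in> carrier_vec n" "v \<noteq> 0\<^sub>v n" "M *\<^sub>v v = \<mu> \<cdot>\<^sub>v v"
    unfolding eigenvalue_def eigenvector_def using M by auto
  let ?W = "{v \<in> carrier_vec n. M *\<^sub>v v = \<mu> \<cdot>\<^sub>v v}"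
  have "?W = carrier_vec n"
    using irreducible_repD(3)[OF irr invariant_subspace_eigenspace[OF \<rho> M M_comm]] v by blast
  then have "M = \<mu> \<cdot>\<^sub>m 1\<^sub>m n"
    by (intro eq_mat_by_mult_vec[OF M]) (auto simp: smult_one_mat_mult_vec)
  then show thesis by (rule that)
qed

lemma character_eq_if_equivalent_reps:
  assumes \<rho>: "is_rep G m \<rho>" and \<sigma>: "is_rep G n \<sigma>"
    and T: "T \<in> carrier_mat n m" and S: "S \<in> carrier_mat m n"
    and TS: "T * S = 1\<^sub>m n" and ST: "S * T = 1\<^sub>m m"
    and T_comm: "\<And>g. g \<in> carrier G \<Longrightarrow> T * \<rho> g = \<sigma> g * T"
  shows "character G \<rho> = character G \<sigma>"
proof
  fix g show "character G \<rho> g = character G \<sigma> g"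
  proof (cases "g \<in> carrier G")
    case g: True
    have \<rho>g: "\<rho> g \<in> carrier_mat m m" and \<sigma>g: "\<sigma> g \<in> carrier_mat n n"
      using rep_carrier[OF \<rho> g] rep_carrier[OF \<sigma> g] .
    have "mat_trace (\<sigma> g) = mat_trace (\<sigma> g * (T * S))" using TS \<sigma>g by simp
    also have "\<sigma> g * (T * S) = (T * \<rho> g) * S"
      by (simp only: assoc_mult_mat[OF \<sigma>g T S, symmetric] T_comm[OF g])
    also have "mat_trace \<dots> = mat_trace (S * (T * \<rho> g))"
      using \<rho>g T S by (intro mat_trace_mult_comm[of _ n m]) auto
    also have "S * (T * \<rho> g) = \<rho> g"
      by (simp only: assoc_mult_mat[OF S T \<rho>g, symmetric] ST left_mult_one_mat[OF \<rho>g])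
    finally show ?thesis unfolding character_def using g by simp
  qed (simp add: character_def)
qed

lemma schur_zero:
  assumes irr\<rho>: "irreducible_rep G m \<rho>" and irr\<sigma>: "irreducible_rep G n \<sigma>"
    and T: "T \<in> carrier_mat n m" and T_comm: "\<And>g. g \<in> carrier G \<Longrightarrow> T * \<rho> g = \<sigma> g * T"
    and ne: "character G \<rho> \<noteq> character G \<sigma>"
  shows "T = 0\<^sub>m n m"
proof (rule ccontr)
  assume T0: "T \<noteq> 0\<^sub>m n m"
  note \<rho> = irreducible_repD(1)[OF irr\<rho>] and \<sigma> = irreducible_repD(1)[OF irr\<sigma>]
  let ?K = "{v \<in> carrier_vec m. T *\<^sub>v v = 0\<^sub>v n}" and ?I = "{T *\<^sub>v v | v. v \<in> carrier_vec m}"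
  obtain v where v: "v \<in> carrier_vec m" and Tv: "T *\<^sub>v v \<noteq> 0\<^sub>v n"
    using T0 eq_zero_mat_by_mult_vec[OF T] by blast
  have "?K \<noteq> carrier_vec m" using v Tv by blast
  then have K: "?K = {0\<^sub>v m}"
    using irreducible_repD(3)[OF irr\<rho> invariant_subspace_kernel[OF \<rho> \<sigma> T T_comm]] by blast
  have inj: "injective_mat T"
  proof (rule injective_matI[OF T])
    fix w assume "w \<in> carrier_vec m" "T *\<^sub>v w = 0\<^sub>v n"
    then have "w \<in> ?K" by simp
    then show "w = 0\<^sub>v m" unfolding K by simp
  qed
  have "T *\<^sub>v v \<in> ?I" using v by blast
  then have "?I \<noteq> {0\<^sub>v n}" using Tv by blast
  then have I: "?I = carrier_vec n"
    using irreducible_repD(3)[OF irr\<sigma> invariant_subspace_image[OF \<rho> \<sigma> T T_comm]] by blast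
  have "\<exists>v\<in>carrier_vec m. T *\<^sub>v v = w" if "w \<in> carrier_vec n" for w
  proof -
    have "w \<in> ?I" using I that by simp
    then show ?thesis by blast
  qed
  then obtain S where "S \<in> carrier_mat m n" "T * S = 1\<^sub>m n" "S * T = 1\<^sub>m m"
    using injective_mat_surjective_inverse[OF T inj] by blast
  then have "character G \<rho> = character G \<sigma>"
    using character_eq_if_equivalent_reps[OF \<rho> \<sigma> T] T_comm by blast
  with ne show False ..
qed

section \<open>Orthogonality relations\<close>

locale finite_group = group +
  assumes finite_carrier: "finite (carrier G)"
begin

lemma card_carrier_pos: "0 < card (carrier G)"
  using finite_carrier by (metis card_gt_0_iff empty_iff one_closed)

lemma rep_inv_mult: "is_rep G n \<rho> \<Longrightarrow> g \<in> carrier G \<Longrightarrow> \<rho> (inv g) * \<rho> g = 1\<^sub>m n"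
  by (metis inv_closed l_inv rep_mult rep_one)

lemma character_one: "is_rep G n \<rho> \<Longrightarrow> character G \<rho> \<one> = of_nat n"
  unfolding character_def by (simp add: rep_one)

lemma character_conj:
  assumes \<rho>: "is_rep G n \<rho>" and x: "x \<in> carrier G" and g: "g \<in> carrier G"
  shows "character G \<rho> (x \<otimes> g \<otimes> inv x) = character G \<rho> g"
proof -
  have \<rho>x: "\<rho> x \<in> carrier_mat n n" and \<rho>g: "\<rho> g \<in> carrier_mat n n" and \<rho>x': "\<rho> (inv x) \<in> carrier_mat n n"
    using rep_carrier[OF \<rho>] x g by auto
  have "mat_trace (\<rho> (x \<otimes> g \<otimes> inv x)) = mat_trace (\<rho> x * (\<rho> g * \<rho> (inv x)))"
    using \<rho> x g by (simp add: rep_mult assoc_mult_mat[OF \<rho>x \<rho>g \<rho>x'])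
  also have "\<dots> = mat_trace ((\<rho> g * \<rho> (inv x)) * \<rho> x)"
    using \<rho>x \<rho>g \<rho>x' by (intro mat_trace_mult_comm[of _ n n]) auto
  also have "\<dots> = mat_trace (\<rho> g)"
    using \<rho> x by (simp add: assoc_mult_mat[OF \<rho>g \<rho>x' \<rho>x] rep_inv_mult right_mult_one_mat[OF \<rho>g])
  finally show ?thesis unfolding character_def using x g by simp
qed

lemma sum_carrier_lmult: "g \<in> carrier G \<Longrightarrow> (\<Sum>h\<in>carrier G. f (g \<otimes> h)) = (\<Sum>h\<in>carrier G. f h)"
  by (rule sum.reindex_bij_witness[of _ "\<lambda>h. inv g \<otimes> h" "\<lambda>h. g \<otimes> h"])
     (auto simp: m_assoc[symmetric])

lemma sum_carrier_inv: "(\<Sum>h\<in>carrier G. f (inv h)) = (\<Sum>h\<in>carrier G. f h)"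
  by (rule sum.reindex_bij_witness[of _ "\<lambda>h. inv h" "\<lambda>h. inv h"]) auto

lemma sum_carrier_conj: "x \<in> carrier G \<Longrightarrow> (\<Sum>h\<in>carrier G. f (x \<otimes> h \<otimes> inv x)) = (\<Sum>h\<in>carrier G. f h)"
  by (rule sum.reindex_bij_witness[of _ "\<lambda>h. inv x \<otimes> h \<otimes> x" "\<lambda>h. x \<otimes> h \<otimes> inv x"])
     (auto simp: m_assoc[symmetric], simp_all add: m_assoc)

lemma sum_carrier_delta: "t \<in> carrier G \<Longrightarrow> (\<Sum>x\<in>carrier G. if x = t then f x else 0) = f t"
  by (simp add: finite_carrier)

text \<open>The matrix \<open>\<Sum>\<^sub>h \<sigma>(h) E\<^sub>i\<^sub>k \<rho>(h\<inverse>)\<close>, where \<open>E\<^sub>i\<^sub>k\<close> is a matrix unit.\<close>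

definition averaged_unit_mat ::
    "('a \<Rightarrow> complex mat) \<Rightarrow> ('a \<Rightarrow> complex mat) \<Rightarrow> nat \<Rightarrow> nat \<Rightarrow> nat \<Rightarrow> nat \<Rightarrow> complex mat" where
  "averaged_unit_mat \<rho> \<sigma> m n i k =
     mat n m (\<lambda>(a,b). \<Sum>h\<in>carrier G. \<sigma> h $$ (a,i) * \<rho> (inv h) $$ (k,b))"

lemma averaged_unit_mat_carrier: "averaged_unit_mat \<rho> \<sigma> m n i k \<in> carrier_mat n m"
  unfolding averaged_unit_mat_def by simp

lemma averaged_unit_mat_intertwines:
  assumes \<rho>: "is_rep G m \<rho>" and \<sigma>: "is_rep G n \<sigma>" and g: "g \<in> carrier G" and i: "i < n" and k: "k < m"
  shows "averaged_unit_mat \<rho> \<sigma> m n i k * \<rho> g = \<sigma> g * averaged_unit_mat \<rho> \<sigma> m n i k"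
    (is "?A * _ = _")
proof (rule eq_matI)
  fix a b assume "a < dim_row (\<sigma> g * ?A)" "b < dim_col (\<sigma> g * ?A)"
  then have a: "a < n" and b: "b < m" using rep_carrier[OF \<sigma> g] by (simp_all add: averaged_unit_mat_def)
  have "(?A * \<rho> g) $$ (a,b) = (\<Sum>c<m. \<Sum>h\<in>carrier G. \<sigma> h $$ (a,i) * \<rho> (inv h) $$ (k,c) * \<rho> g $$ (c,b))"
    using a index_mult_mat_sum[OF averaged_unit_mat_carrier rep_carrier[OF \<rho> g] a b]
    by (simp add: averaged_unit_mat_def sum_distrib_right)
  also have "\<dots> = (\<Sum>h\<in>carrier G. \<sigma> h $$ (a,i) * (\<Sum>c<m. \<rho> (inv h) $$ (k,c) * \<rho> g $$ (c,b)))"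
    by (subst sum.swap) (simp add: sum_distrib_left mult.assoc)
  also have "\<dots> = (\<Sum>h\<in>carrier G. \<sigma> h $$ (a,i) * \<rho> (inv h \<otimes> g) $$ (k,b))"
    using index_rep_mult[OF \<rho> _ g k b] by simp
  finally have lhs: "(?A * \<rho> g) $$ (a,b) = (\<Sum>h\<in>carrier G. \<sigma> h $$ (a,i) * \<rho> (inv h \<otimes> g) $$ (k,b))" .
  have "(\<sigma> g * ?A) $$ (a,b) = (\<Sum>c<n. \<Sum>h\<in>carrier G. \<sigma> g $$ (a,c) * \<sigma> h $$ (c,i) * \<rho> (inv h) $$ (k,b))"
    using b index_mult_mat_sum[OF rep_carrier[OF \<sigma> g] averaged_unit_mat_carrier a b]
    by (simp add: averaged_unit_mat_def sum_distrib_left mult.assoc)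
  also have "\<dots> = (\<Sum>h\<in>carrier G. (\<Sum>c<n. \<sigma> g $$ (a,c) * \<sigma> h $$ (c,i)) * \<rho> (inv h) $$ (k,b))"
    by (subst sum.swap) (simp add: sum_distrib_right)
  also have "\<dots> = (\<Sum>h\<in>carrier G. \<sigma> (g \<otimes> h) $$ (a,i) * \<rho> (inv h) $$ (k,b))"
    using index_rep_mult[OF \<sigma> g _ a i] by simp
  also have "\<dots> = (\<Sum>h\<in>carrier G. \<sigma> (g \<otimes> (inv g \<otimes> h)) $$ (a,i) * \<rho> (inv (inv g \<otimes> h)) $$ (k,b))"
    using sum_carrier_lmult[of "inv g" "\<lambda>h. \<sigma> (g \<otimes> h) $$ (a,i) * \<rho> (inv h) $$ (k,b)"] g by simp
  also have "\<dots> = (\<Sum>h\<in>carrier G. \<sigma> h $$ (a,i) * \<rho> (inv h \<otimes> g) $$ (k,b))"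
    using g by (intro sum.cong refl) (simp add: m_assoc[symmetric] inv_mult_group)
  finally show "(?A * \<rho> g) $$ (a,b) = (\<sigma> g * ?A) $$ (a,b)" using lhs by simp
qed (use rep_carrier[OF \<sigma> g] rep_carrier[OF \<rho> g] in \<open>simp_all add: averaged_unit_mat_def\<close>)

lemma rep_coeff_orth:
  assumes irr: "irreducible_rep G m \<rho>" and a: "a < m" and b: "b < m" and i: "i < m" and k: "k < m"
  shows "(\<Sum>h\<in>carrier G. \<rho> h $$ (a,i) * \<rho> (inv h) $$ (k,b)) =
    (if a = b \<and> k = i then of_nat (card (carrier G)) / of_nat m else 0)"
proof -
  note \<rho> = irreducible_repD(1)[OF irr] and m = irreducible_repD(2)[OF irr]
  obtain c where c: "averaged_unit_mat \<rho> \<rho> m m i k = c \<cdot>\<^sub>m 1\<^sub>m m"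
    using schur_scalar[OF irr averaged_unit_mat_carrier averaged_unit_mat_intertwines[OF \<rho> \<rho> _ i k]] by blast
  have "mat_trace (averaged_unit_mat \<rho> \<rho> m m i k) =
      (\<Sum>h\<in>carrier G. \<Sum>a<m. \<rho> (inv h) $$ (k,a) * \<rho> h $$ (a,i))"
    unfolding mat_trace_def averaged_unit_mat_def by (simp add: sum.swap[of _ "carrier G"] mult.commute)
  also have "\<dots> = (\<Sum>h\<in>carrier G. (\<rho> (inv h) * \<rho> h) $$ (k,i))"
    by (intro sum.cong refl) (simp add: index_mult_mat_sum[OF rep_carrier[OF \<rho>] rep_carrier[OF \<rho>] k i])
  also have "\<dots> = (if k = i then of_nat (card (carrier G)) else 0)"
    using rep_inv_mult[OF \<rho>] k i by simp
  finally have "c * of_nat m = (if k = i then of_nat (card (carrier G)) else 0)"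
    unfolding c by (simp add: mat_trace_smult[of _ m])
  then have "c = (if k = i then of_nat (card (carrier G)) / of_nat m else 0)"
    using m by (auto simp: field_simps split: if_splits)
  moreover have "(\<Sum>h\<in>carrier G. \<rho> h $$ (a,i) * \<rho> (inv h) $$ (k,b)) = averaged_unit_mat \<rho> \<rho> m m i k $$ (a,b)"
    unfolding averaged_unit_mat_def using a b by simp
  ultimately show ?thesis unfolding c using a b by simp
qed

lemma rep_coeff_orth_inequivalent:
  assumes irr\<rho>: "irreducible_rep G m \<rho>" and irr\<sigma>: "irreducible_rep G n \<sigma>"
    and ne: "character G \<rho> \<noteq> character G \<sigma>"
    and a: "a < n" and b: "b < m" and i: "i < n" and k: "k < m"
  shows "(\<Sum>h\<in>carrier G. \<sigma> h $$ (a,i) * \<rho> (inv h) $$ (k,b)) = 0"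
proof -
  note \<rho> = irreducible_repD(1)[OF irr\<rho>] and \<sigma> = irreducible_repD(1)[OF irr\<sigma>]
  have "averaged_unit_mat \<rho> \<sigma> m n i k = 0\<^sub>m n m"
    using schur_zero[OF irr\<rho> irr\<sigma> averaged_unit_mat_carrier averaged_unit_mat_intertwines[OF \<rho> \<sigma> _ i k] ne] .
  then have "averaged_unit_mat \<rho> \<sigma> m n i k $$ (a,b) = 0" using a b by simp
  then show ?thesis using a b unfolding averaged_unit_mat_def by simp
qed

lemma character_rep_coeff_orth:
  assumes irr\<rho>: "irreducible_rep G m \<rho>" and irr\<sigma>: "irreducible_rep G n \<sigma>" and i: "i < n" and j: "j < n"
  shows "(\<Sum>h\<in>carrier G. character G \<rho> (inv h) * \<sigma> h $$ (i,j)) =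
    (if character G \<rho> = character G \<sigma> \<and> i = j then of_nat (card (carrier G)) / of_nat n else 0)"
proof (cases "character G \<rho> = character G \<sigma>")
  case True
  note \<sigma> = irreducible_repD(1)[OF irr\<sigma>]
  have "(\<Sum>h\<in>carrier G. character G \<rho> (inv h) * \<sigma> h $$ (i,j)) =
        (\<Sum>k<n. \<Sum>h\<in>carrier G. \<sigma> h $$ (i,j) * \<sigma> (inv h) $$ (k,k))"
    unfolding True by (subst sum.swap) (simp add: character_eq_sum_diag[OF \<sigma>] sum_distrib_left mult.commute)
  also have "\<dots> = (\<Sum>k<n. if k = i \<and> k = j then of_nat (card (carrier G)) / of_nat n else 0)"
    using rep_coeff_orth[OF irr\<sigma> i _ j] by (intro sum.cong refl) auto
  finally show ?thesis using True i by (simp add: sum.delta)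
next
  case False
  note \<rho> = irreducible_repD(1)[OF irr\<rho>]
  have "(\<Sum>h\<in>carrier G. character G \<rho> (inv h) * \<sigma> h $$ (i,j)) =
        (\<Sum>k<m. \<Sum>h\<in>carrier G. \<sigma> h $$ (i,j) * \<rho> (inv h) $$ (k,k))"
    by (subst sum.swap) (simp add: character_eq_sum_diag[OF \<rho>] sum_distrib_left mult.commute)
  also have "\<dots> = 0"
    using rep_coeff_orth_inequivalent[OF irr\<rho> irr\<sigma> False i _ j] by (intro sum.neutral) auto
  finally show ?thesis using False by simp
qed

lemma character_orth:
  assumes irr\<rho>: "irreducible_rep G m \<rho>" and irr\<sigma>: "irreducible_rep G n \<sigma>"
  shows "(\<Sum>h\<in>carrier G. character G \<rho> (inv h) * character G \<sigma> h) =
     (if character G \<rho> = character G \<sigma> then of_nat (card (carrier G)) else 0)"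
proof -
  note \<sigma> = irreducible_repD(1)[OF irr\<sigma>] and n = irreducible_repD(2)[OF irr\<sigma>]
  have "(\<Sum>h\<in>carrier G. character G \<rho> (inv h) * character G \<sigma> h) =
        (\<Sum>i<n. \<Sum>h\<in>carrier G. character G \<rho> (inv h) * \<sigma> h $$ (i,i))"
    by (subst sum.swap) (simp add: character_eq_sum_diag[OF \<sigma>] sum_distrib_left)
  also have "\<dots> = (\<Sum>i<n. if character G \<rho> = character G \<sigma> then of_nat (card (carrier G)) / of_nat n else 0)"
    using character_rep_coeff_orth[OF irr\<rho> irr\<sigma>] by simp
  finally show ?thesis using n by simp
qed

lemma sum_rep_conj:
  assumes irr: "irreducible_rep G m \<rho>" and y: "y \<in> carrier G" and a: "a < m" and b: "b < m"
  shows "(\<Sum>x\<in>carrier G. \<rho> (x \<otimes> y \<otimes> inv x) $$ (a,b)) =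
     (if a = b then of_nat (card (carrier G)) / of_nat m * character G \<rho> y else 0)"
proof -
  note \<rho> = irreducible_repD(1)[OF irr]
  have "\<rho> (x \<otimes> y \<otimes> inv x) $$ (a,b) =
       (\<Sum>c<m. \<Sum>d<m. \<rho> y $$ (c,d) * (\<rho> x $$ (a,c) * \<rho> (inv x) $$ (d,b)))" if x: "x \<in> carrier G" for x
  proof -
    have "\<rho> (x \<otimes> y \<otimes> inv x) $$ (a,b) = (\<Sum>d<m. \<rho> (x \<otimes> y) $$ (a,d) * \<rho> (inv x) $$ (d,b))"
      using index_rep_mult[OF \<rho> _ inv_closed[OF x] a b] x y by simp
    also have "\<dots> = (\<Sum>d<m. \<Sum>c<m. \<rho> x $$ (a,c) * \<rho> y $$ (c,d) * \<rho> (inv x) $$ (d,b))"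
      using index_rep_mult[OF \<rho> x y a] by (simp add: sum_distrib_right)
    also have "\<dots> = (\<Sum>c<m. \<Sum>d<m. \<rho> y $$ (c,d) * (\<rho> x $$ (a,c) * \<rho> (inv x) $$ (d,b)))"
      by (subst sum.swap) (simp add: mult_ac)
    finally show ?thesis .
  qed
  then have "(\<Sum>x\<in>carrier G. \<rho> (x \<otimes> y \<otimes> inv x) $$ (a,b)) =
     (\<Sum>x\<in>carrier G. \<Sum>c<m. \<Sum>d<m. \<rho> y $$ (c,d) * (\<rho> x $$ (a,c) * \<rho> (inv x) $$ (d,b)))"
    by (rule sum.cong[OF refl])
  also have "\<dots> = (\<Sum>c<m. \<Sum>d<m. \<rho> y $$ (c,d) * (\<Sum>x\<in>carrier G. \<rho> x $$ (a,c) * \<rho> (inv x) $$ (d,b)))"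
    by (subst sum.swap) (simp only: sum_distrib_left, intro sum.cong refl, rule sum.swap)
  also have "\<dots> = (\<Sum>c<m. \<Sum>d<m. \<rho> y $$ (c,d) * (if a = b \<and> d = c then of_nat (card (carrier G)) / of_nat m else 0))"
    using rep_coeff_orth[OF irr a b] by (intro sum.cong refl) simp
  also have "\<dots> = (\<Sum>c<m. if a = b then \<rho> y $$ (c,c) * (of_nat (card (carrier G)) / of_nat m) else 0)"
    by (intro sum.cong refl) (auto simp: sum.delta)
  also have "\<dots> = (if a = b then of_nat (card (carrier G)) / of_nat m * character G \<rho> y else 0)"
    using character_eq_sum_diag[OF \<rho> y] by (simp add: sum_distrib_left sum_divide_distrib mult.commute)
  finally show ?thesis .
qed

lemma sum_rep_commutators:
  assumes irr: "irreducible_rep G m \<rho>" and a: "a < m" and b: "b < m"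
  shows "(\<Sum>x\<in>carrier G. \<Sum>y\<in>carrier G. \<rho> (x \<otimes> y \<otimes> inv x \<otimes> inv y) $$ (a,b)) =
     (if a = b then (of_nat (card (carrier G)) / of_nat m)^2 else 0)"
proof -
  note \<rho> = irreducible_repD(1)[OF irr]
  have "(\<Sum>x\<in>carrier G. \<Sum>y\<in>carrier G. \<rho> (x \<otimes> y \<otimes> inv x \<otimes> inv y) $$ (a,b)) =
        (\<Sum>y\<in>carrier G. \<Sum>x\<in>carrier G. \<Sum>c<m. \<rho> (x \<otimes> y \<otimes> inv x) $$ (a,c) * \<rho> (inv y) $$ (c,b))"
    by (subst sum.swap) (intro sum.cong refl, rule index_rep_mult[OF \<rho> _ _ a b], simp_all)
  also have "\<dots> = (\<Sum>y\<in>carrier G. \<Sum>c<m. (\<Sum>x\<in>carrier G. \<rho> (x \<otimes> y \<otimes> inv x) $$ (a,c)) * \<rho> (inv y) $$ (c,b))"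
    by (intro sum.cong refl) (simp only: sum_distrib_right, rule sum.swap)
  also have "\<dots> = (\<Sum>y\<in>carrier G. \<Sum>c<m. (if a = c then of_nat (card (carrier G)) / of_nat m * character G \<rho> y else 0) * \<rho> (inv y) $$ (c,b))"
    using sum_rep_conj[OF irr _ a] by (intro sum.cong refl) simp
  also have "\<dots> = (\<Sum>y\<in>carrier G. of_nat (card (carrier G)) / of_nat m * (character G \<rho> y * \<rho> (inv y) $$ (a,b)))"
    using a by (intro sum.cong refl) (simp add: sum.delta)
  also have "\<dots> = of_nat (card (carrier G)) / of_nat m * (\<Sum>y\<in>carrier G. character G \<rho> (inv (inv y)) * \<rho> (inv y) $$ (a,b))"
    by (simp add: sum_distrib_left)
  also have "\<dots> = of_nat (card (carrier G)) / of_nat m * (\<Sum>y\<in>carrier G. character G \<rho> (inv y) * \<rho> y $$ (a,b))"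
    by (subst sum_carrier_inv[of "\<lambda>y. character G \<rho> (inv y) * \<rho> y $$ (a,b)"]) simp
  also have "\<dots> = (if a = b then (of_nat (card (carrier G)) / of_nat m)^2 else 0)"
    using character_rep_coeff_orth[OF irr irr a b] by (simp add: power2_eq_square)
  finally show ?thesis .
qed

section \<open>The group algebra\<close>

text \<open>Elements of the group algebra are coefficient functions, as for \<^const>\<open>central_idem\<close>;
  \<open>conv\<close> is their product.\<close>

definition conv :: "('a \<Rightarrow> complex) \<Rightarrow> ('a \<Rightarrow> complex) \<Rightarrow> 'a \<Rightarrow> complex" where
  "conv f h g = (\<Sum>x\<in>carrier G. f x * h (inv x \<otimes> g))"

definition delta_one :: "'a \<Rightarrow> complex" where
  "delta_one g = (if g = \<one> then 1 else 0)"

definition commutator_sum :: "'a \<Rightarrow> complex" where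
  "commutator_sum z = (\<Sum>a\<in>carrier G. \<Sum>b\<in>carrier G. if a \<otimes> b \<otimes> inv a \<otimes> inv b = z then 1 else 0)"

lemma conv_delta_one_left: "g \<in> carrier G \<Longrightarrow> conv delta_one f g = f g"
  unfolding conv_def delta_one_def by (simp add: finite_carrier)

lemma conv_delta_one_right:
  assumes g: "g \<in> carrier G"
  shows "conv f delta_one g = f g"
proof -
  have "(inv x \<otimes> g = \<one>) = (x = g)" if "x \<in> carrier G" for x
    using inv_solve_left'[OF one_closed that g] that g by auto
  then have "conv f delta_one g = (\<Sum>x\<in>carrier G. if x = g then f x else 0)"
    unfolding conv_def delta_one_def by (intro sum.cong refl) simp
  also have "\<dots> = f g" using g by (simp add: finite_carrier)
  finally show ?thesis .
qed

lemma conv_cong_left: "(\<And>x. x \<in> carrier G \<Longrightarrow> f x = f' x) \<Longrightarrow> conv f h g = conv f' h g"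
  unfolding conv_def by simp

lemma conv_diff_left: "conv (\<lambda>x. a x - b x) h g = conv a h g - conv b h g"
  unfolding conv_def by (simp add: sum_subtractf left_diff_distrib)

lemma conv_diff_right: "conv f (\<lambda>x. a x - b x) g = conv f a g - conv f b g"
  unfolding conv_def by (simp add: sum_subtractf right_diff_distrib)

lemma conv_sum_left: "conv (\<lambda>x. \<Sum>i\<in>I. a i x) h g = (\<Sum>i\<in>I. conv (a i) h g)"
  unfolding conv_def by (simp add: sum_distrib_right sum.swap[of _ I])

lemma conv_sum_right: "conv f (\<lambda>x. \<Sum>i\<in>I. a i x) g = (\<Sum>i\<in>I. conv f (a i) g)"
  unfolding conv_def by (simp add: sum_distrib_left sum.swap[of _ I])

lemma conv_smult_left: "conv (\<lambda>x. c * f x) h g = c * conv f h g"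
  unfolding conv_def by (simp add: sum_distrib_left mult_ac)

lemma conv_lin_right: "conv f (\<lambda>x. (a * A x + b * B x)) g = a * conv f A g + b * conv f B g"
  unfolding conv_def by (simp add: sum.distrib sum_distrib_left distrib_left mult_ac)

lemma conv_assoc:
  assumes g: "g \<in> carrier G"
  shows "conv f (conv h k) g = conv (conv f h) k g"
proof -
  have "(\<Sum>y\<in>carrier G. f x * h y * k (inv y \<otimes> (inv x \<otimes> g))) =
        (\<Sum>z\<in>carrier G. f x * h (inv x \<otimes> z) * k (inv z \<otimes> g))" if x: "x \<in> carrier G" for x
  proof -
    have "(\<Sum>z\<in>carrier G. f x * h (inv x \<otimes> z) * k (inv z \<otimes> g)) =
          (\<Sum>y\<in>carrier G. f x * h (inv x \<otimes> (x \<otimes> y)) * k (inv (x \<otimes> y) \<otimes> g))"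
      by (rule sum_carrier_lmult[OF x, symmetric])
    also have "\<dots> = (\<Sum>y\<in>carrier G. f x * h y * k (inv y \<otimes> (inv x \<otimes> g)))"
      using x g by (intro sum.cong refl) (simp add: m_assoc[symmetric] inv_mult_group)
    finally show ?thesis by simp
  qed
  then have "conv f (conv h k) g = (\<Sum>x\<in>carrier G. \<Sum>z\<in>carrier G. f x * h (inv x \<otimes> z) * k (inv z \<otimes> g))"
    unfolding conv_def by (simp add: sum_distrib_left mult_ac)
  also have "\<dots> = conv (conv f h) k g"
    unfolding conv_def by (subst sum.swap) (simp add: sum_distrib_right)
  finally show ?thesis .
qed

lemma central_idem_character:
  "is_rep G n \<rho> \<Longrightarrow> central_idem G (character G \<rho>) g =
     of_nat n / of_nat (card (carrier G)) * character G \<rho> (inv g)"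
  unfolding central_idem_def by (simp add: character_one Coset.order_def)

lemma central_idem_conj:
  assumes \<chi>: "\<chi> \<in> irr_chars G" and x: "x \<in> carrier G" and g: "g \<in> carrier G"
  shows "central_idem G \<chi> (x \<otimes> g \<otimes> inv x) = central_idem G \<chi> g"
proof -
  obtain m \<rho> where irr: "irreducible_rep G m \<rho>" and \<chi>_eq: "\<chi> = character G \<rho>"
    using \<chi> unfolding irr_chars_def by blast
  have "inv (x \<otimes> g \<otimes> inv x) = x \<otimes> inv g \<otimes> inv x"
    using x g by (simp add: inv_mult_group m_assoc)
  then show ?thesis
    unfolding central_idem_def \<chi>_eq using character_conj[OF irreducible_repD(1)[OF irr] x] g by simp
qed

lemma conv_central_idem:
  assumes irr\<rho>: "irreducible_rep G m \<rho>" and irr\<sigma>: "irreducible_rep G n \<sigma>" and g: "g \<in> carrier G"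
  shows "conv (central_idem G (character G \<rho>)) (central_idem G (character G \<sigma>)) g =
    (if character G \<rho> = character G \<sigma> then central_idem G (character G \<sigma>) g else 0)"
proof -
  note \<rho> = irreducible_repD(1)[OF irr\<rho>] and \<sigma> = irreducible_repD(1)[OF irr\<sigma>]
    and n = irreducible_repD(2)[OF irr\<sigma>]
  let ?N = "of_nat (card (carrier G)) :: complex" and ?same = "character G \<rho> = character G \<sigma>"
  have "conv (central_idem G (character G \<rho>)) (central_idem G (character G \<sigma>)) g =
     (\<Sum>x\<in>carrier G. of_nat m / ?N * (of_nat n / ?N) *
       (\<Sum>i<n. \<Sum>j<n. \<sigma> (inv g) $$ (i,j) * (character G \<rho> (inv x) * \<sigma> x $$ (j,i))))"
    unfolding conv_def
  proof (intro sum.cong refl)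
    fix x assume x: "x \<in> carrier G"
    have "inv (inv x \<otimes> g) = inv g \<otimes> x" using x g by (simp add: inv_mult_group)
    then have "central_idem G (character G \<sigma>) (inv x \<otimes> g) =
        of_nat n / ?N * (\<Sum>i<n. \<Sum>j<n. \<sigma> (inv g) $$ (i,j) * \<sigma> x $$ (j,i))"
      using central_idem_character[OF \<sigma>] character_eq_sum_diag[OF \<sigma>]
        index_rep_mult[OF \<sigma> inv_closed[OF g] x] x g by simp
    then show "central_idem G (character G \<rho>) x * central_idem G (character G \<sigma>) (inv x \<otimes> g) =
        of_nat m / ?N * (of_nat n / ?N) *
        (\<Sum>i<n. \<Sum>j<n. \<sigma> (inv g) $$ (i,j) * (character G \<rho> (inv x) * \<sigma> x $$ (j,i)))"
      using central_idem_character[OF \<rho>] by (simp add: sum_distrib_left mult_ac)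
  qed
  also have "\<dots> = of_nat m / ?N * (of_nat n / ?N) * (\<Sum>i<n. \<Sum>j<n. \<sigma> (inv g) $$ (i,j) *
       (\<Sum>x\<in>carrier G. character G \<rho> (inv x) * \<sigma> x $$ (j,i)))"
    by (simp only: sum_distrib_left, subst sum.swap, intro arg_cong[where f = "(*) _"] sum.cong refl, rule sum.swap)
  also have "\<dots> = of_nat m / ?N * (of_nat n / ?N) *
       (\<Sum>i<n. if ?same then \<sigma> (inv g) $$ (i,i) * (?N / of_nat n) else 0)"
    using character_rep_coeff_orth[OF irr\<rho> irr\<sigma>]
    by (intro arg_cong[where f = "(*) _"] sum.cong refl) (simp add: sum.delta)
  also have "\<dots> = (if ?same then central_idem G (character G \<sigma>) g else 0)"
  proof (cases ?same)
    case True
    then have "m = n" using character_one[OF \<rho>] character_one[OF \<sigma>] by (metis of_nat_eq_iff)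
    then show ?thesis
      using True n card_carrier_pos central_idem_character[OF \<sigma>] character_eq_sum_diag[OF \<sigma> inv_closed[OF g]]
      by (simp add: sum_distrib_left sum_divide_distrib)
  qed simp
  finally show ?thesis .
qed

lemma conv_central_idem_commutator_sum:
  assumes irr: "irreducible_rep G m \<rho>" and g: "g \<in> carrier G"
  shows "conv (central_idem G (character G \<rho>)) commutator_sum g =
     (of_nat (card (carrier G)) / of_nat m)^2 * central_idem G (character G \<rho>) g"
proof -
  note \<rho> = irreducible_repD(1)[OF irr]
  let ?e = "central_idem G (character G \<rho>)" and ?c = "\<lambda>a b. a \<otimes> b \<otimes> inv a \<otimes> inv b"
  let ?N = "of_nat (card (carrier G)) :: complex"
  have c: "?c a b \<in> carrier G" if "a \<in> carrier G" "b \<in> carrier G" for a b using that by simp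
  have "conv ?e commutator_sum g =
      (\<Sum>x\<in>carrier G. \<Sum>a\<in>carrier G. \<Sum>b\<in>carrier G. if x = g \<otimes> inv (?c a b) then ?e x else 0)"
    unfolding conv_def commutator_sum_def
  proof (intro sum.cong refl)
    fix x assume x: "x \<in> carrier G"
    have eq: "(?c a b = inv x \<otimes> g) = (x = g \<otimes> inv (?c a b))" if "a \<in> carrier G" "b \<in> carrier G" for a b
      using inv_solve_left[OF c[OF that] x g] inv_solve_right[OF x g c[OF that]] by simp
    show "?e x * (\<Sum>a\<in>carrier G. \<Sum>b\<in>carrier G. if ?c a b = inv x \<otimes> g then 1 else 0) =
        (\<Sum>a\<in>carrier G. \<Sum>b\<in>carrier G. if x = g \<otimes> inv (?c a b) then ?e x else 0)"
      by (simp add: sum_distrib_left eq cong: sum.cong if_cong)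
  qed
  also have "\<dots> = (\<Sum>a\<in>carrier G. \<Sum>b\<in>carrier G. ?e (g \<otimes> inv (?c a b)))"
    by (subst sum.swap, rule sum.cong[OF refl], subst sum.swap, rule sum.cong[OF refl])
       (rule sum_carrier_delta, use g in simp)
  also have "\<dots> = (\<Sum>a\<in>carrier G. \<Sum>b\<in>carrier G. of_nat m / ?N *
       (\<Sum>i<m. \<Sum>j<m. \<rho> (?c a b) $$ (i,j) * \<rho> (inv g) $$ (j,i)))"
  proof (intro sum.cong refl)
    fix a b assume ab: "a \<in> carrier G" "b \<in> carrier G"
    have "inv (g \<otimes> inv (?c a b)) = ?c a b \<otimes> inv g"
      using ab g c[OF ab] by (simp add: inv_mult_group)
    then show "?e (g \<otimes> inv (?c a b)) = of_nat m / ?N *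
        (\<Sum>i<m. \<Sum>j<m. \<rho> (?c a b) $$ (i,j) * \<rho> (inv g) $$ (j,i))"
      using central_idem_character[OF \<rho>] character_eq_sum_diag[OF \<rho>]
        index_rep_mult[OF \<rho> c[OF ab] inv_closed[OF g]] ab g by simp
  qed
  also have "\<dots> = of_nat m / ?N * (\<Sum>i<m. \<Sum>j<m.
       (\<Sum>a\<in>carrier G. \<Sum>b\<in>carrier G. \<rho> (?c a b) $$ (i,j)) * \<rho> (inv g) $$ (j,i))"
    by (simp only: sum_distrib_left sum_distrib_right sum.swap[of _ "carrier G" "{..<m}"])
  also have "\<dots> = of_nat m / ?N * (\<Sum>i<m. (?N / of_nat m)^2 * \<rho> (inv g) $$ (i,i))"
    using sum_rep_commutators[OF irr] by (simp add: sum.delta)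
  also have "\<dots> = of_nat m / ?N * ((?N / of_nat m)^2 * character G \<rho> (inv g))"
    using character_eq_sum_diag[OF \<rho> inv_closed[OF g]] by (simp add: sum_distrib_left)
  also have "\<dots> = (?N / of_nat m)^2 * ?e g"
    using central_idem_character[OF \<rho>] by simp
  finally show ?thesis .
qed

section \<open>Completeness of the central idempotents\<close>

lemma irr_charsE:
  assumes "\<chi> \<in> irr_chars G"
  obtains n \<rho> where "irreducible_rep G n \<rho>" "\<chi> = character G \<rho>"
  using assms unfolding irr_chars_def by blast

lemma irr_charsI: "irreducible_rep G n \<rho> \<Longrightarrow> character G \<rho> \<in> irr_chars G"
  unfolding irr_chars_def by blast

lemma irr_chars_degree:
  assumes "\<chi> \<in> irr_chars G"
  obtains n where "0 < n" "\<chi> \<one> = of_nat n"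
proof -
  obtain n \<rho> where "irreducible_rep G n \<rho>" "\<chi> = character G \<rho>" using assms by (rule irr_charsE)
  then show thesis using that irreducible_repD(2) character_one[OF irreducible_repD(1)] by blast
qed

lemma conv_central_idem_irr_chars:
  assumes "\<chi> \<in> irr_chars G" "\<psi> \<in> irr_chars G" "g \<in> carrier G"
  shows "conv (central_idem G \<chi>) (central_idem G \<psi>) g = (if \<chi> = \<psi> then central_idem G \<psi> g else 0)"
proof -
  obtain m \<rho> where "irreducible_rep G m \<rho>" "\<chi> = character G \<rho>" using assms(1) by (rule irr_charsE)
  moreover obtain n \<sigma> where "irreducible_rep G n \<sigma>" "\<psi> = character G \<sigma>" using assms(2) by (rule irr_charsE)
  ultimately show ?thesis using conv_central_idem assms(3) by simp
qed

text \<open>By orthogonality, the values of distinct irreducible characters form the columns of an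
  injective \<open>|G| \<times> |F|\<close> matrix.\<close>

lemma card_irr_chars_le:
  assumes F: "F \<subseteq> irr_chars G" and finF: "finite F"
  shows "card F \<le> card (carrier G)"
proof -
  let ?N = "card (carrier G)" and ?k = "card F"
  obtain e where e: "bij_betw e {..<?N} (carrier G)"
    using ex_bij_betw_nat_finite[OF finite_carrier] by (auto simp: atLeast0LessThan)
  obtain f where f: "bij_betw f {..<?k} F"
    using ex_bij_betw_nat_finite[OF finF] by (auto simp: atLeast0LessThan)
  define B where "B = mat ?N ?k (\<lambda>(i,l). f l (e i))"
  have B: "B \<in> carrier_mat ?N ?k" unfolding B_def by simp
  have f_irr: "f l \<in> irr_chars G" if "l < ?k" for l
    using f F that unfolding bij_betw_def by blast
  have "injective_mat B"
  proof (rule injective_matI[OF B])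
    fix v :: "complex vec" assume v: "v \<in> carrier_vec ?k" and Bv: "B *\<^sub>v v = 0\<^sub>v ?N"
    have zero: "(\<Sum>l<?k. f l g * v $ l) = 0" if g: "g \<in> carrier G" for g
    proof -
      obtain i where i: "i < ?N" "e i = g" using e g unfolding bij_betw_def by (metis imageE lessThan_iff)
      have "(B *\<^sub>v v) $ i = (\<Sum>l<?k. f l (e i) * v $ l)"
        using B v i by (simp add: B_def scalar_prod_def atLeast0LessThan)
      then show ?thesis using Bv i by simp
    qed
    show "v = 0\<^sub>v ?k"
    proof (rule eq_vecI)
      fix l0 assume "l0 < dim_vec (0\<^sub>v ?k)"
      then have l0: "l0 < ?k" by simp
      obtain n0 \<rho>0 where r0: "irreducible_rep G n0 \<rho>0" "f l0 = character G \<rho>0"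
        using f_irr[OF l0] by (rule irr_charsE)
      have "0 = (\<Sum>g\<in>carrier G. f l0 (inv g) * (\<Sum>l<?k. f l g * v $ l))"
        using zero by simp
      also have "\<dots> = (\<Sum>l<?k. v $ l * (\<Sum>g\<in>carrier G. f l0 (inv g) * f l g))"
        by (simp add: sum_distrib_left sum.swap[of _ "carrier G"] mult_ac)
      also have "\<dots> = (\<Sum>l<?k. v $ l * (if l = l0 then of_nat ?N else 0))"
      proof (rule sum.cong[OF refl])
        fix l assume "l \<in> {..<?k}"
        then have l: "l < ?k" by simp
        obtain n1 \<rho>1 where r1: "irreducible_rep G n1 \<rho>1" "f l = character G \<rho>1"
          using f_irr[OF l] by (rule irr_charsE)
        have "(f l0 = f l) = (l = l0)" using f l l0 unfolding bij_betw_def inj_on_def by auto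
        then show "v $ l * (\<Sum>g\<in>carrier G. f l0 (inv g) * f l g) = v $ l * (if l = l0 then of_nat ?N else 0)"
          using character_orth[OF r0(1) r1(1)] r0(2) r1(2) by simp
      qed
      also have "\<dots> = v $ l0 * of_nat ?N" using l0 by (simp add: sum.delta)
      finally have "v $ l0 = 0" using card_carrier_pos by simp
      then show "v $ l0 = 0\<^sub>v ?k $ l0" using l0 by simp
    qed (use v in simp)
  qed
  then show ?thesis using injective_mat_dim_le[OF B] by simp
qed

lemma finite_irr_chars: "finite (irr_chars G)"
proof (rule ccontr)
  assume "infinite (irr_chars G)"
  then obtain F where F: "finite F" "card F = Suc (card (carrier G))" "F \<subseteq> irr_chars G"
    using infinite_arbitrarily_large by blast
  have "card F \<le> card (carrier G)" by (rule card_irr_chars_le[OF F(3,1)])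
  with F(2) show False by simp
qed

lemma is_rep_of_injective_intertwiner:
  assumes \<rho>: "is_rep G m \<rho>" and B: "B \<in> carrier_mat m k" and inj: "injective_mat B"
    and R: "\<And>g. R g \<in> carrier_mat k k" and BR: "\<And>g. g \<in> carrier G \<Longrightarrow> B * R g = \<rho> g * B"
  shows "is_rep G k R"
  unfolding is_rep_def
proof (intro conjI ballI)
  fix g h assume g: "g \<in> carrier G" and h: "h \<in> carrier G"
  have \<rho>g: "\<rho> g \<in> carrier_mat m m" and \<rho>h: "\<rho> h \<in> carrier_mat m m" using rep_carrier[OF \<rho>] g h by auto
  have "B * R (g \<otimes> h) = \<rho> g * (\<rho> h * B)"
    using BR[of "g \<otimes> h"] g h rep_mult[OF \<rho> g h] assoc_mult_mat[OF \<rho>g \<rho>h B] by simp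
  also have "\<dots> = (\<rho> g * B) * R h"
    using BR[OF h] assoc_mult_mat[OF \<rho>g B R] by simp
  also have "\<dots> = B * (R g * R h)"
    using BR[OF g] assoc_mult_mat[OF B R[of g] R[of h]] by simp
  finally show "R (g \<otimes> h) = R g * R h"
    by (rule injective_mat_cancel_left[OF B inj R mult_carrier_mat[OF R R]])
next
  have "B * R \<one> = B * 1\<^sub>m k" using BR[of "\<one>"] rep_one[OF \<rho>] B by simp
  then show "R \<one> = 1\<^sub>m k" by (rule injective_mat_cancel_left[OF B inj R one_carrier_mat])
qed (rule R)

lemma subrep_of_invariant_subspace:
  assumes \<rho>: "is_rep G m \<rho>" and W: "invariant_subspace G m \<rho> W"
    and W0: "W \<noteq> {0\<^sub>v m}" and W1: "W \<noteq> carrier_vec m"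
  obtains k B R where "0 < k" "k < m" "B \<in> carrier_mat m k" "injective_mat B"
    "\<And>j. j < k \<Longrightarrow> col B j \<in> W" "is_rep G k R" "\<And>g. g \<in> carrier G \<Longrightarrow> B * R g = \<rho> g * B"
proof -
  have sub: "subspace_vec m W" and inv: "\<And>g v. g \<in> carrier G \<Longrightarrow> v \<in> W \<Longrightarrow> \<rho> g *\<^sub>v v \<in> W"
    using W unfolding invariant_subspace_def by blast+
  obtain k B where B: "B \<in> carrier_mat m k" and inj: "injective_mat B" and cols: "\<And>j. j < k \<Longrightarrow> col B j \<in> W"
    and span: "\<And>w. w \<in> W \<Longrightarrow> \<exists>v\<in>carrier_vec k. B *\<^sub>v v = w" and k: "0 < k" "k < m"
    using subspace_basis_mat[OF sub] W0 W1 by metis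
  define R where "R g = (SOME R. R \<in> carrier_mat k k \<and> B * R = \<rho> g * B)" for g
  have R: "R g \<in> carrier_mat k k \<and> B * R g = \<rho> g * B" if g: "g \<in> carrier G" for g
  proof -
    have "\<exists>c\<in>carrier_vec k. B *\<^sub>v c = \<rho> g *\<^sub>v col B j" if "j < k" for j
      using span[OF inv[OF g cols[OF that]]] .
    then obtain R0 where "R0 \<in> carrier_mat k k" "B * R0 = \<rho> g * B"
      using mat_factor_through_image[OF B rep_carrier[OF \<rho> g]] by blast
    then have "\<exists>R. R \<in> carrier_mat k k \<and> B * R = \<rho> g * B" by blast
    then show ?thesis unfolding R_def by (rule someI_ex)
  qed
  define R' where "R' g = (if g \<in> carrier G then R g else 1\<^sub>m k)" for g
  have R': "R' g \<in> carrier_mat k k" for g unfolding R'_def using R by simp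
  have BR: "B * R' g = \<rho> g * B" if "g \<in> carrier G" for g unfolding R'_def using R that by simp
  show thesis by (rule that[OF k B inj cols is_rep_of_injective_intertwiner[OF \<rho> B inj R' BR] BR])
qed

definition rep_alg :: "('a \<Rightarrow> complex mat) \<Rightarrow> nat \<Rightarrow> ('a \<Rightarrow> complex) \<Rightarrow> complex mat" where
  "rep_alg \<rho> n f = mat n n (\<lambda>(i,j). \<Sum>g\<in>carrier G. f g * \<rho> g $$ (i,j))"

lemma rep_alg_carrier [simp]: "rep_alg \<rho> n f \<in> carrier_mat n n"
  unfolding rep_alg_def by simp

lemma rep_alg_dim [simp]: "dim_row (rep_alg \<rho> n f) = n" "dim_col (rep_alg \<rho> n f) = n"
  unfolding rep_alg_def by simp_all

lemma rep_alg_cong: "(\<And>g. g \<in> carrier G \<Longrightarrow> f g = h g) \<Longrightarrow> rep_alg \<rho> n f = rep_alg \<rho> n h"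
  unfolding rep_alg_def by (intro eq_matI) auto

lemma rep_alg_intertwine:
  assumes B: "B \<in> carrier_mat m k" and \<rho>: "is_rep G m \<rho>" and s: "is_rep G k R"
    and BR: "\<And>g. g \<in> carrier G \<Longrightarrow> B * R g = \<rho> g * B"
  shows "B * rep_alg R k f = rep_alg \<rho> m f * B"
proof (rule eq_matI)
  fix i j assume i: "i < dim_row (rep_alg \<rho> m f * B)" and j: "j < dim_col (rep_alg \<rho> m f * B)"
  have i': "i < m" and j': "j < k" using i j B by auto
  have "(B * rep_alg R k f) $$ (i,j) = (\<Sum>c<k. B $$ (i,c) * (\<Sum>g\<in>carrier G. f g * R g $$ (c,j)))"
    using index_mult_mat_sum[OF B rep_alg_carrier i' j'] j' by (simp add: rep_alg_def)
  also have "\<dots> = (\<Sum>c<k. \<Sum>g\<in>carrier G. f g * (B $$ (i,c) * R g $$ (c,j)))"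
    by (simp add: sum_distrib_left mult_ac)
  also have "\<dots> = (\<Sum>g\<in>carrier G. \<Sum>c<k. f g * (B $$ (i,c) * R g $$ (c,j)))"
    by (rule sum.swap)
  also have "\<dots> = (\<Sum>g\<in>carrier G. f g * (B * R g) $$ (i,j))"
    using index_mult_mat_sum[OF B rep_carrier[OF s] i' j'] by (simp add: sum_distrib_left)
  also have "\<dots> = (\<Sum>g\<in>carrier G. f g * (\<rho> g * B) $$ (i,j))"
    using BR by simp
  also have "\<dots> = (\<Sum>g\<in>carrier G. \<Sum>c<m. f g * (\<rho> g $$ (i,c) * B $$ (c,j)))"
    using index_mult_mat_sum[OF rep_carrier[OF \<rho>] B i' j'] by (simp add: sum_distrib_left)
  also have "\<dots> = (\<Sum>c<m. \<Sum>g\<in>carrier G. f g * (\<rho> g $$ (i,c) * B $$ (c,j)))"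
    by (rule sum.swap)
  also have "\<dots> = (\<Sum>c<m. (\<Sum>g\<in>carrier G. f g * \<rho> g $$ (i,c)) * B $$ (c,j))"
    by (simp add: sum_distrib_right sum_distrib_left mult_ac)
  also have "\<dots> = (rep_alg \<rho> m f * B) $$ (i,j)"
    using index_mult_mat_sum[OF rep_alg_carrier B i' j'] i' by (simp add: rep_alg_def)
  finally show "(B * rep_alg R k f) $$ (i,j) = (rep_alg \<rho> m f * B) $$ (i,j)" .
qed (use B in auto)

lemma rep_alg_conv:
  assumes \<rho>: "is_rep G n \<rho>"
  shows "rep_alg \<rho> n (conv f h) = rep_alg \<rho> n f * rep_alg \<rho> n h"
proof (rule eq_matI)
  fix i j assume i: "i < dim_row (rep_alg \<rho> n f * rep_alg \<rho> n h)" and j: "j < dim_col (rep_alg \<rho> n f * rep_alg \<rho> n h)"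
  have i': "i < n" and j': "j < n" using i j by auto
  have "rep_alg \<rho> n (conv f h) $$ (i,j) = (\<Sum>g\<in>carrier G. (\<Sum>x\<in>carrier G. f x * h (inv x \<otimes> g)) * \<rho> g $$ (i,j))"
    using i' j' by (simp add: rep_alg_def conv_def)
  also have "\<dots> = (\<Sum>x\<in>carrier G. \<Sum>g\<in>carrier G. f x * (h (inv x \<otimes> g) * \<rho> g $$ (i,j)))"
    by (subst sum.swap) (simp add: sum_distrib_right sum_distrib_left mult_ac)
  also have "\<dots> = (\<Sum>x\<in>carrier G. \<Sum>y\<in>carrier G. f x * (h y * \<rho> (x \<otimes> y) $$ (i,j)))"
  proof (rule sum.cong[OF refl])
    fix x assume x: "x \<in> carrier G"
    have "(\<Sum>g\<in>carrier G. f x * (h (inv x \<otimes> g) * \<rho> g $$ (i,j))) =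
          (\<Sum>y\<in>carrier G. f x * (h (inv x \<otimes> (x \<otimes> y)) * \<rho> (x \<otimes> y) $$ (i,j)))"
      by (rule sum_carrier_lmult[OF x, symmetric])
    also have "\<dots> = (\<Sum>y\<in>carrier G. f x * (h y * \<rho> (x \<otimes> y) $$ (i,j)))"
      using x by (intro sum.cong refl) (simp add: m_assoc[symmetric])
    finally show "(\<Sum>g\<in>carrier G. f x * (h (inv x \<otimes> g) * \<rho> g $$ (i,j))) =
          (\<Sum>y\<in>carrier G. f x * (h y * \<rho> (x \<otimes> y) $$ (i,j)))" .
  qed
  also have "\<dots> = (\<Sum>x\<in>carrier G. \<Sum>y\<in>carrier G. \<Sum>c<n. f x * (h y * (\<rho> x $$ (i,c) * \<rho> y $$ (c,j))))"
    using index_rep_mult[OF \<rho> _ _ i' j'] by (simp add: sum_distrib_left)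
  also have "\<dots> = (\<Sum>x\<in>carrier G. \<Sum>c<n. \<Sum>y\<in>carrier G. f x * (h y * (\<rho> x $$ (i,c) * \<rho> y $$ (c,j))))"
    by (intro sum.cong refl) (rule sum.swap)
  also have "\<dots> = (\<Sum>c<n. \<Sum>x\<in>carrier G. \<Sum>y\<in>carrier G. f x * (h y * (\<rho> x $$ (i,c) * \<rho> y $$ (c,j))))"
    by (rule sum.swap)
  also have "\<dots> = (\<Sum>c<n. (\<Sum>x\<in>carrier G. f x * \<rho> x $$ (i,c)) * (\<Sum>y\<in>carrier G. h y * \<rho> y $$ (c,j)))"
    by (simp add: sum_product mult_ac)
  also have "\<dots> = (rep_alg \<rho> n f * rep_alg \<rho> n h) $$ (i,j)"
    using index_mult_mat_sum[OF rep_alg_carrier rep_alg_carrier i' j'] i' j' by (simp add: rep_alg_def)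
  finally show "rep_alg \<rho> n (conv f h) $$ (i,j) = (rep_alg \<rho> n f * rep_alg \<rho> n h) $$ (i,j)" .
qed auto

lemma rep_alg_mult_entry_right:
  assumes \<rho>: "is_rep G n \<rho>" and x: "x \<in> carrier G" and i: "i < n" and j: "j < n"
  shows "(rep_alg \<rho> n f * \<rho> x) $$ (i,j) = (\<Sum>g\<in>carrier G. f g * \<rho> (g \<otimes> x) $$ (i,j))"
proof -
  have \<rho>x: "\<rho> x \<in> carrier_mat n n" using rep_carrier[OF \<rho> x] .
  have "(rep_alg \<rho> n f * \<rho> x) $$ (i,j) = (\<Sum>c<n. (\<Sum>g\<in>carrier G. f g * \<rho> g $$ (i,c)) * \<rho> x $$ (c,j))"
    using index_mult_mat_sum[OF rep_alg_carrier \<rho>x i j] i by (simp add: rep_alg_def)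
  also have "\<dots> = (\<Sum>c<n. \<Sum>g\<in>carrier G. f g * (\<rho> g $$ (i,c) * \<rho> x $$ (c,j)))"
    by (simp add: sum_distrib_left sum_distrib_right mult_ac)
  also have "\<dots> = (\<Sum>g\<in>carrier G. \<Sum>c<n. f g * (\<rho> g $$ (i,c) * \<rho> x $$ (c,j)))"
    by (rule sum.swap)
  also have "\<dots> = (\<Sum>g\<in>carrier G. f g * \<rho> (g \<otimes> x) $$ (i,j))"
    using index_rep_mult[OF \<rho> _ x i j] by (simp add: sum_distrib_left)
  finally show ?thesis .
qed

lemma rep_alg_mult_entry_left:
  assumes \<rho>: "is_rep G n \<rho>" and x: "x \<in> carrier G" and i: "i < n" and j: "j < n"
  shows "(\<rho> x * rep_alg \<rho> n f) $$ (i,j) = (\<Sum>g\<in>carrier G. f g * \<rho> (x \<otimes> g) $$ (i,j))"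
proof -
  have \<rho>x: "\<rho> x \<in> carrier_mat n n" using rep_carrier[OF \<rho> x] .
  have "(\<rho> x * rep_alg \<rho> n f) $$ (i,j) = (\<Sum>c<n. \<rho> x $$ (i,c) * (\<Sum>g\<in>carrier G. f g * \<rho> g $$ (c,j)))"
    using index_mult_mat_sum[OF \<rho>x rep_alg_carrier i j] j by (simp add: rep_alg_def)
  also have "\<dots> = (\<Sum>c<n. \<Sum>g\<in>carrier G. f g * (\<rho> x $$ (i,c) * \<rho> g $$ (c,j)))"
    by (simp add: sum_distrib_left mult_ac)
  also have "\<dots> = (\<Sum>g\<in>carrier G. \<Sum>c<n. f g * (\<rho> x $$ (i,c) * \<rho> g $$ (c,j)))"
    by (rule sum.swap)
  also have "\<dots> = (\<Sum>g\<in>carrier G. f g * \<rho> (x \<otimes> g) $$ (i,j))"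
    using index_rep_mult[OF \<rho> x _ i j] by (simp add: sum_distrib_left)
  finally show ?thesis .
qed

lemma rep_alg_commute:
  assumes \<rho>: "is_rep G n \<rho>" and x: "x \<in> carrier G"
    and f_class: "\<And>y g. y \<in> carrier G \<Longrightarrow> g \<in> carrier G \<Longrightarrow> f (y \<otimes> g \<otimes> inv y) = f g"
  shows "rep_alg \<rho> n f * \<rho> x = \<rho> x * rep_alg \<rho> n f"
proof (rule eq_matI)
  fix i j assume i: "i < dim_row (\<rho> x * rep_alg \<rho> n f)" and j: "j < dim_col (\<rho> x * rep_alg \<rho> n f)"
  have \<rho>x: "\<rho> x \<in> carrier_mat n n" using rep_carrier[OF \<rho> x] .
  have i': "i < n" and j': "j < n" using i j \<rho>x by auto
  have "(rep_alg \<rho> n f * \<rho> x) $$ (i,j) = (\<Sum>g\<in>carrier G. f g * \<rho> (g \<otimes> x) $$ (i,j))"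
    by (rule rep_alg_mult_entry_right[OF \<rho> x i' j'])
  also have "\<dots> = (\<Sum>h\<in>carrier G. f (x \<otimes> h \<otimes> inv x) * \<rho> (x \<otimes> h \<otimes> inv x \<otimes> x) $$ (i,j))"
    by (rule sum_carrier_conj[OF x, symmetric])
  also have "\<dots> = (\<Sum>h\<in>carrier G. f h * \<rho> (x \<otimes> h) $$ (i,j))"
    using x f_class by (intro sum.cong refl) (simp add: m_assoc)
  also have "\<dots> = (\<rho> x * rep_alg \<rho> n f) $$ (i,j)"
    by (rule rep_alg_mult_entry_left[OF \<rho> x i' j', symmetric])
  finally show "(rep_alg \<rho> n f * \<rho> x) $$ (i,j) = (\<rho> x * rep_alg \<rho> n f) $$ (i,j)" .
qed (use rep_carrier[OF \<rho> x] in auto)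

lemma rep_alg_delta_one: "is_rep G n \<rho> \<Longrightarrow> rep_alg \<rho> n delta_one = 1\<^sub>m n"
  unfolding rep_alg_def delta_one_def by (intro eq_matI) (simp_all add: finite_carrier rep_one)

lemma idempotent_fixed_invariant_subspace:
  assumes \<rho>: "is_rep G m \<rho>" and P: "P \<in> carrier_mat m m" and PP: "P * P = P" and P0: "P \<noteq> 0\<^sub>m m m"
    and P_comm: "\<And>g. g \<in> carrier G \<Longrightarrow> P * \<rho> g = \<rho> g * P"
    and W: "invariant_subspace G m \<rho> W" "W \<noteq> {0\<^sub>v m}" "W \<noteq> carrier_vec m"
  obtains W' where "invariant_subspace G m \<rho> W'" "W' \<noteq> {0\<^sub>v m}" "W' \<noteq> carrier_vec m"
    "\<And>w. w \<in> W' \<Longrightarrow> P *\<^sub>v w = w"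
proof (cases "P = 1\<^sub>m m")
  case True
  have "W \<subseteq> carrier_vec m" using W(1) unfolding invariant_subspace_def subspace_vec_def by blast
  then have "P *\<^sub>v w = w" if "w \<in> W" for w using that True by auto
  then show thesis using that W by blast
next
  case False
  let ?I = "{P *\<^sub>v v | v. v \<in> carrier_vec m}"
  have fixed: "P *\<^sub>v w = w" if "w \<in> ?I" for w
  proof -
    obtain v where v: "v \<in> carrier_vec m" "w = P *\<^sub>v v" using \<open>w \<in> ?I\<close> by blast
    then show ?thesis using PP P by (metis assoc_mult_mat_vec)
  qed
  obtain v where v: "v \<in> carrier_vec m" and Pv: "P *\<^sub>v v \<noteq> 0\<^sub>v m"
    using P0 eq_zero_mat_by_mult_vec[OF P] by blast
  have "P *\<^sub>v v \<in> ?I" using v by blast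
  then have "?I \<noteq> {0\<^sub>v m}" using Pv by blast
  moreover have "?I \<noteq> carrier_vec m"
  proof
    assume I: "?I = carrier_vec m"
    have "P = 1\<^sub>m m"
    proof (rule eq_mat_by_mult_vec[OF P one_carrier_mat])
      fix w :: "complex vec" assume "w \<in> carrier_vec m"
      then show "P *\<^sub>v w = 1\<^sub>m m *\<^sub>v w" using fixed I by simp
    qed
    with False show False ..
  qed
  ultimately show thesis using that invariant_subspace_image[OF \<rho> \<rho> P P_comm] fixed by blast
qed

text \<open>No complete reducibility is needed: an idempotent acting nontrivially fixes a proper
  invariant subspace, and the subrepresentation on it has smaller degree.\<close>

lemma rep_alg_eq_zero_if_irreducibles:
  assumes idem: "\<And>g. g \<in> carrier G \<Longrightarrow> conv f f g = f g"
    and f_class: "\<And>x g. x \<in> carrier G \<Longrightarrow> g \<in> carrier G \<Longrightarrow> f (x \<otimes> g \<otimes> inv x) = f g"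
    and irr: "\<And>k \<sigma>. irreducible_rep G k \<sigma> \<Longrightarrow> rep_alg \<sigma> k f = 0\<^sub>m k k"
    and \<rho>: "is_rep G m \<rho>"
  shows "rep_alg \<rho> m f = 0\<^sub>m m m"
  using \<rho>
proof (induction m arbitrary: \<rho> rule: less_induct)
  case (less m \<rho>)
  let ?P = "rep_alg \<rho> m f"
  show ?case
  proof (rule ccontr)
    assume P0: "?P \<noteq> 0\<^sub>m m m"
    have "?P * ?P = rep_alg \<rho> m (conv f f)" by (rule rep_alg_conv[OF less.prems, symmetric])
    also have "\<dots> = ?P" by (rule rep_alg_cong) (rule idem)
    finally have PP: "?P * ?P = ?P" .
    have P_comm: "?P * \<rho> g = \<rho> g * ?P" if "g \<in> carrier G" for g
      by (intro rep_alg_commute[OF less.prems that] f_class)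
    have m: "0 < m"
    proof (rule ccontr)
      assume "\<not> 0 < m"
      then have "?P = 0\<^sub>m m m" by (intro eq_matI) simp_all
      with P0 show False ..
    qed
    have "\<not> irreducible_rep G m \<rho>"
    proof
      assume "irreducible_rep G m \<rho>"
      then have "?P = 0\<^sub>m m m" by (rule irr)
      with P0 show False ..
    qed
    then obtain W where W: "invariant_subspace G m \<rho> W" "W \<noteq> {0\<^sub>v m}" "W \<noteq> carrier_vec m"
      by (rule not_irreducible_repE[OF less.prems m])
    obtain W' where W': "invariant_subspace G m \<rho> W'" "W' \<noteq> {0\<^sub>v m}" "W' \<noteq> carrier_vec m"
      and fixed: "\<And>w. w \<in> W' \<Longrightarrow> ?P *\<^sub>v w = w"
      using idempotent_fixed_invariant_subspace[OF less.prems rep_alg_carrier PP P0 P_comm W] by blast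
    obtain k B R where k: "0 < k" "k < m" and B: "B \<in> carrier_mat m k" and inj: "injective_mat B"
      and cols: "\<And>j. j < k \<Longrightarrow> col B j \<in> W'" and R: "is_rep G k R"
      and BR: "\<And>g. g \<in> carrier G \<Longrightarrow> B * R g = \<rho> g * B"
      using subrep_of_invariant_subspace[OF less.prems W'] by blast
    have "?P * B = B" by (rule mult_mat_fixed_cols[OF rep_alg_carrier B]) (use fixed cols in blast)
    then have "B * rep_alg R k f = B * 1\<^sub>m k"
      using rep_alg_intertwine[OF B less.prems R BR] B by simp
    then have "rep_alg R k f = 1\<^sub>m k"
      by (rule injective_mat_cancel_left[OF B inj rep_alg_carrier one_carrier_mat])
    moreover have "rep_alg R k f = 0\<^sub>m k k" by (rule less.IH[OF k(2) R])
    ultimately have "(1\<^sub>m k :: complex mat) $$ (0,0) = 0\<^sub>m k k $$ (0,0)" by simp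
    then show False using k(1) by simp
  qed
qed

lemma rep_alg_central_idem:
  assumes irr: "irreducible_rep G m \<rho>" and \<chi>: "\<chi> \<in> irr_chars G"
  shows "rep_alg \<rho> m (central_idem G \<chi>) = (if \<chi> = character G \<rho> then 1\<^sub>m m else 0\<^sub>m m m)"
proof (rule eq_matI)
  obtain n \<sigma> where irr\<sigma>: "irreducible_rep G n \<sigma>" and \<chi>_eq: "\<chi> = character G \<sigma>"
    using \<chi> by (rule irr_charsE)
  note \<sigma> = irreducible_repD(1)[OF irr\<sigma>] and \<rho> = irreducible_repD(1)[OF irr]
    and m = irreducible_repD(2)[OF irr]
  let ?N = "of_nat (card (carrier G)) :: complex"
  fix i j assume "i < dim_row (if \<chi> = character G \<rho> then 1\<^sub>m m else 0\<^sub>m m m)"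
    "j < dim_col (if \<chi> = character G \<rho> then 1\<^sub>m m else 0\<^sub>m m m)"
  then have i: "i < m" and j: "j < m" by (simp_all split: if_splits)
  have "rep_alg \<rho> m (central_idem G \<chi>) $$ (i,j) =
      of_nat n / ?N * (\<Sum>g\<in>carrier G. character G \<sigma> (inv g) * \<rho> g $$ (i,j))"
    unfolding rep_alg_def \<chi>_eq using i j central_idem_character[OF \<sigma>] by (simp add: sum_distrib_left mult_ac)
  also have "\<dots> = of_nat n / ?N * (if character G \<sigma> = character G \<rho> \<and> i = j then ?N / of_nat m else 0)"
    using character_rep_coeff_orth[OF irr\<sigma> irr i j] by simp
  also have "\<dots> = (if \<chi> = character G \<rho> then 1\<^sub>m m else 0\<^sub>m m m) $$ (i,j)"
  proof (cases "character G \<sigma> = character G \<rho>")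
    case True
    then have "n = m" using character_one[OF \<sigma>] character_one[OF \<rho>] by (metis of_nat_eq_iff)
    then show ?thesis using True \<chi>_eq m card_carrier_pos i j by simp
  qed (use \<chi>_eq i j in simp)
  finally show "rep_alg \<rho> m (central_idem G \<chi>) $$ (i,j) = (if \<chi> = character G \<rho> then 1\<^sub>m m else 0\<^sub>m m m) $$ (i,j)" .
qed simp_all

definition regular_rep :: "(nat \<Rightarrow> 'a) \<Rightarrow> 'a \<Rightarrow> complex mat" where
  "regular_rep e h = mat (card (carrier G)) (card (carrier G)) (\<lambda>(i,j). if e i = h \<otimes> e j then 1 else 0)"

lemma regular_rep_is_rep:
  assumes e: "bij_betw e {..<card (carrier G)} (carrier G)"
  shows "is_rep G (card (carrier G)) (regular_rep e)"
proof -
  let ?N = "card (carrier G)"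
  have e_inj: "i = j" if "i < ?N" "j < ?N" "e i = e j" for i j
    using e that unfolding bij_betw_def inj_on_def by blast
  have e_in: "e i \<in> carrier G" if "i < ?N" for i using e that unfolding bij_betw_def by auto
  have e_onto: "\<exists>i<?N. e i = h" if "h \<in> carrier G" for h
    using e that unfolding bij_betw_def by (metis imageE lessThan_iff)
  have mult: "regular_rep e (g \<otimes> h) = regular_rep e g * regular_rep e h"
    if g: "g \<in> carrier G" and h: "h \<in> carrier G" for g h
  proof (rule eq_matI)
    fix i j assume "i < dim_row (regular_rep e g * regular_rep e h)" "j < dim_col (regular_rep e g * regular_rep e h)"
    then have i: "i < ?N" and j: "j < ?N" unfolding regular_rep_def by auto
    obtain c0 where c0: "c0 < ?N" "e c0 = h \<otimes> e j" using e_onto[of "h \<otimes> e j"] h e_in[OF j] by auto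
    have "(regular_rep e g * regular_rep e h) $$ (i,j) =
        (\<Sum>c<?N. (if e i = g \<otimes> e c then 1 else 0) * (if e c = h \<otimes> e j then 1 else 0))"
      using index_mult_mat_sum[of "regular_rep e g" ?N ?N "regular_rep e h" ?N i j] i j
      unfolding regular_rep_def by simp
    also have "\<dots> = (\<Sum>c<?N. if c = c0 then (if e i = g \<otimes> e c0 then 1 else 0) else 0)"
    proof (rule sum.cong[OF refl])
      fix c assume "c \<in> {..<?N}"
      then have "(e c = h \<otimes> e j) = (c = c0)" using e_inj[of c c0] c0 by auto
      then show "(if e i = g \<otimes> e c then 1 else 0) * (if e c = h \<otimes> e j then 1 else 0) =
          (if c = c0 then (if e i = g \<otimes> e c0 then 1 else 0) else (0::complex))" by auto
    qed
    also have "\<dots> = (if e i = g \<otimes> e c0 then 1 else 0)" using c0 by (simp add: sum.delta)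
    also have "\<dots> = regular_rep e (g \<otimes> h) $$ (i,j)"
      unfolding regular_rep_def using i j c0 g h e_in[OF j] by (simp add: m_assoc)
    finally show "regular_rep e (g \<otimes> h) $$ (i,j) = (regular_rep e g * regular_rep e h) $$ (i,j)" by simp
  qed (simp_all add: regular_rep_def)
  have one: "regular_rep e \<one> = 1\<^sub>m ?N"
  proof (rule eq_matI)
    fix i j assume "i < dim_row (1\<^sub>m ?N)" "j < dim_col (1\<^sub>m ?N)"
    then have i: "i < ?N" and j: "j < ?N" by auto
    have "(e i = \<one> \<otimes> e j) = (i = j)" using e_inj[OF i j] e_in[OF j] by auto
    then show "regular_rep e \<one> $$ (i,j) = 1\<^sub>m ?N $$ (i,j)" unfolding regular_rep_def using i j by simp
  qed (simp_all add: regular_rep_def)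
  show ?thesis unfolding is_rep_def using mult one by (simp add: regular_rep_def)
qed

lemma eq_zero_if_rep_alg_regular_rep_zero:
  assumes e: "bij_betw e {..<card (carrier G)} (carrier G)"
    and f0: "rep_alg (regular_rep e) (card (carrier G)) f = 0\<^sub>m (card (carrier G)) (card (carrier G))"
    and g: "g \<in> carrier G"
  shows "f g = 0"
proof -
  let ?N = "card (carrier G)"
  obtain i where i: "i < ?N" "e i = g" using e g unfolding bij_betw_def by (metis imageE lessThan_iff)
  obtain j where j: "j < ?N" "e j = \<one>" using e unfolding bij_betw_def by (metis imageE lessThan_iff one_closed)
  have "rep_alg (regular_rep e) ?N f $$ (i,j) = (\<Sum>h\<in>carrier G. f h * (if e i = h \<otimes> e j then 1 else 0))"
    unfolding rep_alg_def regular_rep_def using i j by simp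
  also have "\<dots> = (\<Sum>h\<in>carrier G. if h = g then f h else 0)"
    using i j by (intro sum.cong refl) auto
  also have "\<dots> = f g" using g by (rule sum_carrier_delta)
  finally show ?thesis using f0 i j by simp
qed

lemma rep_alg_diff: "rep_alg \<rho> n (\<lambda>g. f g - h g) = rep_alg \<rho> n f - rep_alg \<rho> n h"
  unfolding rep_alg_def by (intro eq_matI) (simp_all add: sum_subtractf left_diff_distrib)

lemma index_rep_alg_sum:
  "i < n \<Longrightarrow> j < n \<Longrightarrow> rep_alg \<rho> n (\<lambda>g. \<Sum>x\<in>I. f x g) $$ (i,j) = (\<Sum>x\<in>I. rep_alg \<rho> n (f x) $$ (i,j))"
  unfolding rep_alg_def by (simp add: sum_distrib_right sum.swap[of _ "carrier G"])

lemma conv_sum_central_idem: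
  assumes S: "S \<subseteq> irr_chars G" and g: "g \<in> carrier G"
  shows "conv (\<lambda>x. \<Sum>\<chi>\<in>S. central_idem G \<chi> x) (\<lambda>x. \<Sum>\<chi>\<in>S. central_idem G \<chi> x) g =
    (\<Sum>\<chi>\<in>S. central_idem G \<chi> g)"
proof -
  have fin: "finite S" using S finite_irr_chars finite_subset by blast
  have "conv (\<lambda>x. \<Sum>\<chi>\<in>S. central_idem G \<chi> x) (\<lambda>x. \<Sum>\<chi>\<in>S. central_idem G \<chi> x) g =
      (\<Sum>\<chi>\<in>S. \<Sum>\<psi>\<in>S. if \<chi> = \<psi> then central_idem G \<psi> g else 0)"
    using S g by (simp add: conv_sum_left conv_sum_right conv_central_idem_irr_chars subsetD)
  also have "\<dots> = (\<Sum>\<chi>\<in>S. central_idem G \<chi> g)"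
    using fin by (simp add: sum.delta)
  finally show ?thesis .
qed

lemma sum_central_idem_conj:
  assumes S: "S \<subseteq> irr_chars G" and x: "x \<in> carrier G" and g: "g \<in> carrier G"
  shows "(\<Sum>\<chi>\<in>S. central_idem G \<chi> (x \<otimes> g \<otimes> inv x)) = (\<Sum>\<chi>\<in>S. central_idem G \<chi> g)"
  using S central_idem_conj[OF _ x g] by (intro sum.cong refl) blast

lemma delta_one_conj: "x \<in> carrier G \<Longrightarrow> g \<in> carrier G \<Longrightarrow> delta_one (x \<otimes> g \<otimes> inv x) = delta_one g"
  unfolding delta_one_def by (metis inv_closed inv_inv m_closed r_inv l_one m_assoc r_one)

text \<open>The difference \<open>u\<close> is an idempotent class function killed by every irreducible
  representation, hence by the regular one.\<close>

theorem sum_central_idem_eq_delta_one: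
  assumes g: "g \<in> carrier G"
  shows "(\<Sum>\<chi>\<in>irr_chars G. central_idem G \<chi> g) = delta_one g"
proof -
  let ?E = "\<lambda>x. \<Sum>\<chi>\<in>irr_chars G. central_idem G \<chi> x"
  define u where "u = (\<lambda>x. delta_one x - ?E x)"
  have u_idem: "conv u u x = u x" if x: "x \<in> carrier G" for x
  proof -
    have "conv ?E u x = conv ?E delta_one x - conv ?E ?E x"
      unfolding u_def by (rule conv_diff_right)
    also have "\<dots> = 0" using conv_delta_one_right[OF x] conv_sum_central_idem[OF order_refl x] by simp
    finally have "conv ?E u x = 0" .
    moreover have "conv u u x = conv delta_one u x - conv ?E u x"
      unfolding u_def by (rule conv_diff_left)
    ultimately show ?thesis using conv_delta_one_left[OF x] by simp
  qed
  have u_class: "u (y \<otimes> x \<otimes> inv y) = u x" if "y \<in> carrier G" "x \<in> carrier G" for x y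
    unfolding u_def using delta_one_conj[OF that] sum_central_idem_conj[OF order_refl that] by simp
  have u_irr: "rep_alg \<sigma> k u = 0\<^sub>m k k" if irr: "irreducible_rep G k \<sigma>" for k \<sigma>
  proof (rule eq_matI)
    fix i j assume "i < dim_row (0\<^sub>m k k :: complex mat)" "j < dim_col (0\<^sub>m k k :: complex mat)"
    then have i: "i < k" and j: "j < k" by simp_all
    have "rep_alg \<sigma> k ?E $$ (i,j) = (\<Sum>\<chi>\<in>irr_chars G. (if \<chi> = character G \<sigma> then 1\<^sub>m k else 0\<^sub>m k k) $$ (i,j))"
      using rep_alg_central_idem[OF irr] i j by (simp add: index_rep_alg_sum)
    also have "\<dots> = (\<Sum>\<chi>\<in>irr_chars G. if \<chi> = character G \<sigma> then 1\<^sub>m k $$ (i,j) else 0)"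
      using i j by (intro sum.cong refl) simp
    also have "\<dots> = 1\<^sub>m k $$ (i,j)"
      using irr_charsI[OF irr] by (simp add: sum.delta[OF finite_irr_chars] del: index_one_mat)
    finally show "rep_alg \<sigma> k u $$ (i,j) = 0\<^sub>m k k $$ (i,j)"
      unfolding u_def rep_alg_diff rep_alg_delta_one[OF irreducible_repD(1)[OF irr]] using i j by simp
  qed simp_all
  obtain e where e: "bij_betw e {..<card (carrier G)} (carrier G)"
    using ex_bij_betw_nat_finite[OF finite_carrier] by (auto simp: atLeast0LessThan)
  have "u g = 0"
    using eq_zero_if_rep_alg_regular_rep_zero[OF e
        rep_alg_eq_zero_if_irreducibles[OF u_idem u_class u_irr regular_rep_is_rep[OF e]] g] .
  then show ?thesis unfolding u_def by simp
qed

section \<open>Rationality of \<open>E\<^sub>d\<close>\<close>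

definition rat_supported :: "'a set \<Rightarrow> ('a \<Rightarrow> complex) \<Rightarrow> bool" where
  "rat_supported N f \<longleftrightarrow> (\<forall>g\<in>carrier G. f g \<in> \<rat> \<and> (g \<notin> N \<longrightarrow> f g = 0))"

lemma rat_supported_delta_one: "subgroup N G \<Longrightarrow> rat_supported N delta_one"
  unfolding rat_supported_def delta_one_def using subgroup.one_closed by auto

lemma rat_supported_commutator_sum: "rat_supported (derived G (carrier G)) commutator_sum"
  unfolding rat_supported_def
proof (intro ballI conjI impI)
  fix g assume g: "g \<in> carrier G"
  show "commutator_sum g \<in> \<rat>" unfolding commutator_sum_def by (intro Rats_sum) auto
  assume "g \<notin> derived G (carrier G)"
  moreover have "a \<otimes> b \<otimes> inv a \<otimes> inv b \<in> derived G (carrier G)" if "a \<in> carrier G" "b \<in> carrier G" for a b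
    unfolding derived_def using that by (intro generate.incl) blast
  ultimately show "commutator_sum g = 0" unfolding commutator_sum_def by (intro sum.neutral ballI) auto
qed

lemma rat_supported_lin:
  "rat_supported N f \<Longrightarrow> rat_supported N h \<Longrightarrow> a \<in> \<rat> \<Longrightarrow> b \<in> \<rat> \<Longrightarrow>
   rat_supported N (\<lambda>g. a * f g + b * h g)"
  unfolding rat_supported_def by auto

lemma rat_supported_conv:
  assumes N: "subgroup N G" and f: "rat_supported N f" and h: "rat_supported N h"
  shows "rat_supported N (conv f h)"
  unfolding rat_supported_def
proof (intro ballI conjI impI)
  fix g assume g: "g \<in> carrier G"
  show "conv f h g \<in> \<rat>" unfolding conv_def
    using f h g unfolding rat_supported_def by (intro Rats_sum Rats_mult) auto
  assume gN: "g \<notin> N"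
  have "f x * h (inv x \<otimes> g) = 0" if x: "x \<in> carrier G" for x
  proof (cases "x \<in> N")
    case True
    have "inv x \<otimes> g \<notin> N"
    proof
      assume "inv x \<otimes> g \<in> N"
      then have "x \<otimes> (inv x \<otimes> g) \<in> N" using True subgroup.m_closed[OF N] by blast
      then show False using x g gN by (simp add: m_assoc[symmetric])
    qed
    then show ?thesis using h x g unfolding rat_supported_def by simp
  next
    case False
    then show ?thesis using f x unfolding rat_supported_def by simp
  qed
  then show "conv f h g = 0" unfolding conv_def by (simp add: sum.neutral)
qed

text \<open>Since \<open>e\<^sub>\<chi>\<close> times the sum of all commutators is \<open>(|G| / \<chi>(1))\<^sup>2 e\<^sub>\<chi>\<close>, a polynomial
  in that sum vanishing at the eigenvalues \<open>as\<close> and equal to \<open>1\<close> at \<open>t\<close> cuts out the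
  \<open>e\<^sub>\<chi>\<close> with \<open>(|G| / \<chi>(1))\<^sup>2 = t\<close> (Lagrange interpolation).\<close>

primrec commutator_interp :: "complex \<Rightarrow> complex list \<Rightarrow> 'a \<Rightarrow> complex" where
  "commutator_interp t [] = delta_one"
| "commutator_interp t (a # as) =
     (\<lambda>g. 1 / (t - a) * conv commutator_sum (commutator_interp t as) g +
          - a / (t - a) * commutator_interp t as g)"

lemma rat_supported_commutator_interp:
  "t \<in> \<rat> \<Longrightarrow> set as \<subseteq> \<rat> \<Longrightarrow> rat_supported (derived G (carrier G)) (commutator_interp t as)"
proof (induction as)
  case Nil
  then show ?case by (simp add: rat_supported_delta_one derived_is_subgroup)
next
  case (Cons a as)
  then have "a \<in> \<rat>" and IH: "rat_supported (derived G (carrier G)) (commutator_interp t as)" by simp_all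
  have "rat_supported (derived G (carrier G))
      (\<lambda>g. 1 / (t - a) * conv commutator_sum (commutator_interp t as) g + - a / (t - a) * commutator_interp t as g)"
    by (rule rat_supported_lin[OF rat_supported_conv[OF derived_is_subgroup rat_supported_commutator_sum IH] IH])
       (use \<open>a \<in> \<rat>\<close> Cons.prems(1) in simp_all)
  then show ?case by simp
qed

definition commutator_eigenvalue :: "('a \<Rightarrow> complex) \<Rightarrow> complex" where
  "commutator_eigenvalue \<chi> = (of_nat (card (carrier G)) / \<chi> \<one>)^2"

lemma conv_central_idem_commutator_interp:
  assumes \<chi>: "\<chi> \<in> irr_chars G" and g: "g \<in> carrier G"
  shows "conv (central_idem G \<chi>) (commutator_interp t as) g =
    (\<Prod>a\<leftarrow>as. (commutator_eigenvalue \<chi> - a) / (t - a)) * central_idem G \<chi> g"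
  using g
proof (induction as arbitrary: g)
  case Nil
  then show ?case by (simp add: conv_delta_one_right)
next
  case (Cons a as)
  obtain m \<rho> where irr: "irreducible_rep G m \<rho>" and \<chi>_eq: "\<chi> = character G \<rho>" using \<chi> by (rule irr_charsE)
  have "\<chi> \<one> = of_nat m" using character_one[OF irreducible_repD(1)[OF irr]] \<chi>_eq by simp
  then have ec: "conv (central_idem G \<chi>) commutator_sum x = commutator_eigenvalue \<chi> * central_idem G \<chi> x"
    if "x \<in> carrier G" for x
    using conv_central_idem_commutator_sum[OF irr that] \<chi>_eq unfolding commutator_eigenvalue_def by simp
  have "conv (central_idem G \<chi>) (conv commutator_sum (commutator_interp t as)) g =
      conv (conv (central_idem G \<chi>) commutator_sum) (commutator_interp t as) g"
    by (rule conv_assoc[OF Cons.prems])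
  also have "\<dots> = commutator_eigenvalue \<chi> * conv (central_idem G \<chi>) (commutator_interp t as) g"
    by (simp only: conv_cong_left[OF ec] conv_smult_left)
  finally have comm: "conv (central_idem G \<chi>) (conv commutator_sum (commutator_interp t as)) g =
      commutator_eigenvalue \<chi> * conv (central_idem G \<chi>) (commutator_interp t as) g" .
  define p where "p = (\<Prod>a\<leftarrow>as. (commutator_eigenvalue \<chi> - a) / (t - a))"
  have "conv (central_idem G \<chi>) (commutator_interp t (a # as)) g =
      1 / (t - a) * conv (central_idem G \<chi>) (conv commutator_sum (commutator_interp t as)) g +
      - a / (t - a) * conv (central_idem G \<chi>) (commutator_interp t as) g"
    by (simp only: commutator_interp.simps conv_lin_right)
  also have "\<dots> = 1 / (t - a) * (commutator_eigenvalue \<chi> * (p * central_idem G \<chi> g)) +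
      - a / (t - a) * (p * central_idem G \<chi> g)"
    by (simp only: comm Cons.IH[OF Cons.prems] p_def)
  also have "\<dots> = (commutator_eigenvalue \<chi> - a) / (t - a) * p * central_idem G \<chi> g"
    by (simp add: divide_inverse algebra_simps)
  finally show ?case by (simp add: p_def)
qed

lemma commutator_eigenvalue_eq_iff:
  assumes \<chi>: "\<chi> \<in> irr_chars G"
  shows "commutator_eigenvalue \<chi> = (of_nat (card (carrier G)) / of_nat d)^2 \<longleftrightarrow> \<chi> \<one> = of_nat d"
proof
  obtain n where n: "0 < n" "\<chi> \<one> = of_nat n" using \<chi> by (rule irr_chars_degree)
  assume e: "commutator_eigenvalue \<chi> = (of_nat (card (carrier G)) / of_nat d)^2"
  then have e': "(of_nat (card (carrier G)) / of_nat n :: complex)^2 = (of_nat (card (carrier G)) / of_nat d)^2"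
    using n unfolding commutator_eigenvalue_def by simp
  show "\<chi> \<one> = of_nat d"
  proof (cases "d = 0")
    case True
    then show ?thesis using e' card_carrier_pos n by simp
  next
    case False
    then have "(of_nat n :: complex)^2 = (of_nat d)^2"
      using e' n card_carrier_pos by (simp add: field_simps power_divide)
    then have "of_nat (n^2) = (of_nat (d^2) :: complex)" by simp
    then have "d^2 = n^2" by (simp only: of_nat_eq_iff)
    then show ?thesis using n by (simp add: power2_eq_iff_nonneg)
  qed
qed (simp add: commutator_eigenvalue_def)

lemma E_deg_eq_commutator_interp:
  obtains t as where "t \<in> \<rat>" "set as \<subseteq> \<rat>"
    "\<And>g. g \<in> carrier G \<Longrightarrow> E_deg G d g = commutator_interp t as g"
proof -
  define t :: complex where "t = (of_nat (card (carrier G)) / of_nat d)^2"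
  have "finite (commutator_eigenvalue ` irr_chars G - {t})" using finite_irr_chars by simp
  then obtain as where as: "set as = commutator_eigenvalue ` irr_chars G - {t}" and dist: "distinct as"
    using finite_distinct_list by blast
  have "commutator_eigenvalue \<chi> \<in> \<rat>" if \<chi>: "\<chi> \<in> irr_chars G" for \<chi>
  proof -
    obtain n where "0 < n" "\<chi> \<one> = of_nat n" using \<chi> by (rule irr_chars_degree)
    then show ?thesis unfolding commutator_eigenvalue_def by simp
  qed
  then have as_rat: "set as \<subseteq> \<rat>" using as by auto
  have coeff: "(\<Prod>a\<leftarrow>as. (commutator_eigenvalue \<chi> - a) / (t - a)) = (if \<chi> \<one> = of_nat d then 1 else 0)"
    if \<chi>: "\<chi> \<in> irr_chars G" for \<chi>
    using lagrange_coeff_prod_list[OF dist as imageI[OF \<chi>]] commutator_eigenvalue_eq_iff[OF \<chi>]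
    unfolding t_def by simp
  have E: "E_deg G d g = commutator_interp t as g" if g: "g \<in> carrier G" for g
  proof -
    have "commutator_interp t as g = conv delta_one (commutator_interp t as) g"
      by (rule conv_delta_one_left[OF g, symmetric])
    also have "\<dots> = conv (\<lambda>x. \<Sum>\<chi>\<in>irr_chars G. central_idem G \<chi> x) (commutator_interp t as) g"
      by (rule conv_cong_left) (simp add: sum_central_idem_eq_delta_one)
    also have "\<dots> = (\<Sum>\<chi>\<in>irr_chars G. conv (central_idem G \<chi>) (commutator_interp t as) g)"
      by (rule conv_sum_left)
    also have "\<dots> = (\<Sum>\<chi>\<in>irr_chars G. if \<chi> \<one> = of_nat d then central_idem G \<chi> g else 0)"
      by (intro sum.cong refl) (simp add: conv_central_idem_commutator_interp[OF _ g] coeff)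
    also have "\<dots> = E_deg G d g"
      unfolding E_deg_def using finite_irr_chars by (simp add: sum.inter_filter)
    finally show ?thesis by simp
  qed
  show thesis by (rule that[OF _ as_rat E]) (simp add: t_def)
qed

lemma rat_supported_E_deg: "rat_supported (derived G (carrier G)) (E_deg G d)"
proof -
  obtain t as where "t \<in> \<rat>" "set as \<subseteq> \<rat>" and E: "\<And>g. g \<in> carrier G \<Longrightarrow> E_deg G d g = commutator_interp t as g"
    using E_deg_eq_commutator_interp[of d] by blast
  then show ?thesis using rat_supported_commutator_interp unfolding rat_supported_def by simp
qed

lemma conv_E_deg_self: "g \<in> carrier G \<Longrightarrow> conv (E_deg G d) (E_deg G d) g = E_deg G d g"
  using conv_sum_central_idem[of "{\<chi>\<in>irr_chars G. \<chi> \<one> = of_nat d}"] unfolding E_deg_def by auto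

lemma E_deg_conj: "x \<in> carrier G \<Longrightarrow> g \<in> carrier G \<Longrightarrow> E_deg G d (x \<otimes> g \<otimes> inv x) = E_deg G d g"
  using sum_central_idem_conj[of "{\<chi>\<in>irr_chars G. \<chi> \<one> = of_nat d}"] unfolding E_deg_def by auto

end

section \<open>Integrality\<close>

lemma rat_root_of_monic_int_poly_Ints:
  fixes p :: "int poly" and q :: rat
  assumes mon: "lead_coeff p = 1" and root: "poly (map_poly of_int p) q = 0"
  shows "q \<in> \<int>"
proof -
  obtain a b where qab: "quotient_of q = (a,b)" by (cases "quotient_of q")
  have b0: "b > 0" using quotient_of_denom_pos[OF qab] .
  have cop: "coprime a b" using quotient_of_coprime[OF qab] .
  have qd: "q = of_int a / of_int b" using quotient_of_div[OF qab] .
  define n where "n = degree p"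
  have degm: "degree (map_poly (of_int :: int \<Rightarrow> rat) p) = n"
    unfolding n_def by (rule degree_map_poly) simp
  have "poly (map_poly of_int p) q = (\<Sum>i\<le>n. of_int (coeff p i) * q ^ i)"
    by (simp add: poly_altdef degm n_def)
  then have z: "(\<Sum>i\<le>n. of_int (coeff p i) * q ^ i) = 0" using root by simp
  have "(\<Sum>i\<le>n. of_int (coeff p i) * q ^ i) * of_int b ^ n = (\<Sum>i\<le>n. of_int (coeff p i * a ^ i * b ^ (n - i)) :: rat)"
    unfolding sum_distrib_right
  proof (rule sum.cong[OF refl])
    fix i assume "i \<in> {..n}"
    then have i: "i \<le> n" by simp
    have "(of_int b :: rat) ^ n = of_int b ^ i * of_int b ^ (n - i)"
      using i by (simp add: power_add[symmetric])
    then show "of_int (coeff p i) * q ^ i * of_int b ^ n = (of_int (coeff p i * a ^ i * b ^ (n - i)) :: rat)"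
      using b0 by (simp add: qd power_divide)
  qed
  then have "(of_int (\<Sum>i\<le>n. coeff p i * a ^ i * b ^ (n - i)) :: rat) = 0" using z by simp
  then have S0: "(\<Sum>i\<le>n. coeff p i * a ^ i * b ^ (n - i)) = 0" by (simp only: of_int_eq_0_iff)
  have "(\<Sum>i\<le>n. coeff p i * a ^ i * b ^ (n - i)) = (\<Sum>i<Suc n. coeff p i * a ^ i * b ^ (n - i))"
    by (simp only: lessThan_Suc_atMost)
  also have "\<dots> = coeff p n * a ^ n * b ^ 0 + (\<Sum>i<n. coeff p i * a ^ i * b ^ (n - i))"
    by (simp only: sum.lessThan_Suc diff_self_eq_0 add.commute)
  also have "coeff p n = 1" using mon unfolding n_def by simp
  finally have e: "a ^ n = - (\<Sum>i<n. coeff p i * a ^ i * b ^ (n - i))" using S0 by simp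
  have "b dvd (\<Sum>i<n. coeff p i * a ^ i * b ^ (n - i))"
  proof (rule dvd_sum)
    fix i assume "i \<in> {..<n}"
    then have "n - i = Suc (n - i - 1)" by simp
    then show "b dvd coeff p i * a ^ i * b ^ (n - i)" by simp
  qed
  then have bd: "b dvd a ^ n" using e by simp
  have cb: "coprime b (a ^ n)" using cop by (simp add: coprime_commute)
  have "is_unit b" by (rule coprime_common_divisor[OF cb dvd_refl bd])
  then have "b = 1" using b0 by simp
  then show ?thesis using qd by simp
qed

lemma rational_eigenvalue_of_int_mat_Ints:
  fixes M :: "int mat" and s :: complex
  assumes M: "M \<in> carrier_mat K K" and ev: "eigenvalue (map_mat of_int M) s" and sq: "s \<in> \<rat>"
  shows "s \<in> \<int>"
proof -
  have Mc: "map_mat (of_int :: int \<Rightarrow> complex) M \<in> carrier_mat K K" using M by simp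
  have "poly (char_poly (map_mat of_int M)) s = 0" using eigenvalue_root_char_poly[OF Mc] ev by simp
  also have "char_poly (map_mat (of_int :: int \<Rightarrow> complex) M) = map_poly of_int (char_poly M)"
    by (rule of_int_hom.char_poly_hom[OF M])
  finally have r0: "poly (map_poly (of_int :: int \<Rightarrow> complex) (char_poly M)) s = 0" .
  obtain q where q: "s = of_rat q" using sq by (auto elim: Rats_cases)
  define cp where "cp = char_poly M"
  have mon: "lead_coeff cp = 1" using degree_monic_char_poly[OF M] unfolding cp_def by simp
  have d1: "degree (map_poly (of_int :: int \<Rightarrow> complex) cp) = degree cp" by (rule degree_map_poly) simp
  have d2: "degree (map_poly (of_int :: int \<Rightarrow> rat) cp) = degree cp" by (rule degree_map_poly) simp
  have "poly (map_poly (of_int :: int \<Rightarrow> complex) cp) (of_rat q) = of_rat (poly (map_poly of_int cp) q)"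
    by (simp add: poly_altdef d1 d2 of_rat_sum of_rat_mult of_rat_power)
  then have "of_rat (poly (map_poly of_int cp) q) = (0::complex)" using r0 q unfolding cp_def by simp
  then have "poly (map_poly of_int cp) q = 0" by simp
  then have "q \<in> \<int>" by (rule rat_root_of_monic_int_poly_Ints[OF mon])
  then show ?thesis using q by (auto elim: Ints_cases)
qed

text \<open>\<open>M\<close> is a sum of cyclic permutation matrices, one for each exponent \<open>k i\<close>, and
  \<open>(z\<^sup>l)\<^sub>l\<^sub><\<^sub>K\<close> is a common eigenvector.\<close>

lemma sum_of_root_powers_int_mat_eigenvalue:
  fixes z :: complex
  assumes K: "0 < K" and zK: "z ^ K = 1" and I: "finite I"
  obtains M :: "int mat" where "M \<in> carrier_mat K K" "eigenvalue (map_mat of_int M) (\<Sum>i\<in>I. z ^ k i)"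
proof -
  define s where "s = (\<Sum>i\<in>I. z ^ k i)"
  define M :: "int mat" where "M = mat K K (\<lambda>(l,m). \<Sum>i\<in>I. if (k i + l) mod K = m then 1 else 0)"
  have M: "M \<in> carrier_mat K K" unfolding M_def by simp
  define v where "v = vec K (\<lambda>l. z ^ l)"
  have zmod: "z ^ (x mod K) = z ^ x" for x
  proof -
    have "z ^ x = z ^ (x mod K + K * (x div K))" by (simp only: mod_mult_div_eq)
    also have "\<dots> = z ^ (x mod K)" by (simp only: power_add power_mult zK power_one mult_1_right)
    finally show ?thesis by simp
  qed
  have "map_mat of_int M *\<^sub>v v = s \<cdot>\<^sub>v v"
  proof (rule eq_vecI)
    fix l assume "l < dim_vec (s \<cdot>\<^sub>v v)"
    then have l: "l < K" unfolding v_def by simp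
    have "(map_mat of_int M *\<^sub>v v) $ l = (\<Sum>m<K. of_int (M $$ (l,m)) * z ^ m)"
      using M l unfolding v_def by (simp add: scalar_prod_def atLeast0LessThan)
    also have "\<dots> = (\<Sum>m<K. \<Sum>i\<in>I. if (k i + l) mod K = m then z ^ m else 0)"
      unfolding M_def using l by (simp add: of_int_sum sum_distrib_right if_distrib[of of_int] cong: if_cong)
    also have "\<dots> = (\<Sum>i\<in>I. \<Sum>m<K. if (k i + l) mod K = m then z ^ m else 0)"
      by (rule sum.swap)
    also have "\<dots> = (\<Sum>i\<in>I. z ^ ((k i + l) mod K))"
      using K by (intro sum.cong refl) (simp add: sum.delta')
    also have "\<dots> = s * z ^ l" unfolding s_def by (simp add: zmod power_add sum_distrib_right)
    also have "\<dots> = (s \<cdot>\<^sub>v v) $ l" unfolding v_def using l by simp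
    finally show "(map_mat of_int M *\<^sub>v v) $ l = (s \<cdot>\<^sub>v v) $ l" .
  qed (use M in \<open>simp add: v_def\<close>)
  moreover have "v \<in> carrier_vec K" "v \<noteq> 0\<^sub>v K"
    unfolding v_def using K by (auto dest!: arg_cong[where f = "\<lambda>v. v $ 0"])
  ultimately have "eigenvalue (map_mat of_int M) s"
    unfolding eigenvalue_def eigenvector_def using M by auto
  then show thesis using that M unfolding s_def by blast
qed

lemma rational_sum_of_roots_of_unity_Ints:
  fixes f :: "'i \<Rightarrow> complex"
  assumes I: "finite I" and K: "0 < K" and root: "\<And>i. i \<in> I \<Longrightarrow> f i = 0 \<or> f i ^ K = 1"
    and rat: "(\<Sum>i\<in>I. f i) \<in> \<rat>"
  shows "(\<Sum>i\<in>I. f i) \<in> \<int>"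
proof -
  define z where "z = cis (2 * pi / real K)"
  have zK: "z ^ K = 1" unfolding z_def using K by (simp add: DeMoivre)
  define I' where "I' = {i\<in>I. f i \<noteq> 0}"
  have "\<exists>k. f i = z ^ k" if "i \<in> I'" for i
  proof -
    have "f i ^ K = 1" using root that unfolding I'_def by auto
    then have "f i \<in> (\<lambda>k. cis (2 * pi * real k / real K)) ` {..<K}"
      using bij_betw_roots_unity[OF K] unfolding bij_betw_def by blast
    then obtain k where "f i = cis (2 * pi * real k / real K)" by blast
    then have "f i = z ^ k" unfolding z_def by (simp add: DeMoivre mult_ac)
    then show ?thesis ..
  qed
  then obtain k where k: "\<And>i. i \<in> I' \<Longrightarrow> f i = z ^ k i" by metis
  have "(\<Sum>i\<in>I. f i) = (\<Sum>i\<in>I'. f i)"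
    unfolding I'_def using I by (intro sum.mono_neutral_right) auto
  also have "\<dots> = (\<Sum>i\<in>I'. z ^ k i)" using k by simp
  finally have sum: "(\<Sum>i\<in>I. f i) = (\<Sum>i\<in>I'. z ^ k i)" .
  obtain M :: "int mat" where M: "M \<in> carrier_mat K K" "eigenvalue (map_mat of_int M) (\<Sum>i\<in>I'. z ^ k i)"
    using sum_of_root_powers_int_mat_eigenvalue[OF K zK, of I' k] I unfolding I'_def by auto
  have "(\<Sum>i\<in>I'. z ^ k i) \<in> \<int>"
    using rational_eigenvalue_of_int_mat_Ints[OF M] rat sum by simp
  then show ?thesis using sum by simp
qed

lemma eigenvalue_of_periodic_mat:
  fixes A :: "complex mat"
  assumes A: "A \<in> carrier_mat n n" and per: "A ^\<^sub>m Suc K = A" and \<mu>: "eigenvalue A \<mu>"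
  shows "\<mu> = 0 \<or> \<mu> ^ K = 1"
proof -
  obtain v where v: "v \<in> carrier_vec n" "v \<noteq> 0\<^sub>v n" "A *\<^sub>v v = \<mu> \<cdot>\<^sub>v v"
    using \<mu> A unfolding eigenvalue_def eigenvector_def by auto
  have pow: "A ^\<^sub>m k *\<^sub>v v = \<mu> ^ k \<cdot>\<^sub>v v" for k
  proof (induction k)
    case 0
    then show ?case using A v(1) by (simp add: carrier_matD)
  next
    case (Suc k)
    have "A ^\<^sub>m Suc k *\<^sub>v v = A ^\<^sub>m k *\<^sub>v (A *\<^sub>v v)"
      using A v(1) by (simp add: assoc_mult_mat_vec[of _ n n _ n])
    also have "\<dots> = \<mu> \<cdot>\<^sub>v (A ^\<^sub>m k *\<^sub>v v)" using A v by (simp add: mult_mat_vec[of _ n n])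
    also have "\<dots> = \<mu> ^ Suc k \<cdot>\<^sub>v v" using Suc by (simp add: smult_smult_assoc mult.commute)
    finally show ?case .
  qed
  obtain i where i: "i < n" "v $ i \<noteq> 0" using v(1,2) by (metis carrier_vecD eq_vecI index_zero_vec(1,2))
  have "\<mu> ^ Suc K \<cdot>\<^sub>v v = \<mu> \<cdot>\<^sub>v v" using pow[of "Suc K"] per v(3) by simp
  then have "\<mu> ^ Suc K * v $ i = \<mu> * v $ i" using v(1) i by (metis carrier_vecD index_smult_vec(1))
  then have "\<mu> * (\<mu> ^ K - 1) = 0" using i by (simp add: algebra_simps)
  then show ?thesis by simp
qed

lemma mat_trace_of_periodic_mat_Ints:
  fixes A :: "complex mat"
  assumes A: "A \<in> carrier_mat n n" and K: "0 < K" and per: "A ^\<^sub>m Suc K = A"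
    and rat: "mat_trace A \<in> \<rat>"
  shows "mat_trace A \<in> \<int>"
proof -
  obtain \<mu> where tr: "mat_trace A = (\<Sum>i<n. \<mu> i)" and ev: "\<And>i. i < n \<Longrightarrow> eigenvalue A (\<mu> i)"
    using mat_trace_eq_sum_eigenvalues[OF A] by blast
  have "(\<Sum>i<n. \<mu> i) \<in> \<int>"
  proof (rule rational_sum_of_roots_of_unity_Ints[OF finite_lessThan K])
    show "\<mu> i = 0 \<or> \<mu> i ^ K = 1" if "i \<in> {..<n}" for i
      using eigenvalue_of_periodic_mat[OF A per ev] that by simp
    show "(\<Sum>i<n. \<mu> i) \<in> \<rat>" using rat tr by simp
  qed
  then show ?thesis using tr by simp
qed

context finite_group
begin

lemma exists_pow_eq_one:
  assumes g: "g \<in> carrier G"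
  obtains K :: nat where "0 < K" "g [^] K = \<one>"
proof -
  let ?N = "card (carrier G)"
  have "\<not> inj_on (\<lambda>i::nat. g [^] i) {..?N}"
  proof
    assume "inj_on (\<lambda>i::nat. g [^] i) {..?N}"
    moreover have "(\<lambda>i::nat. g [^] i) ` {..?N} \<subseteq> carrier G" using g by auto
    ultimately have "card {..?N} \<le> ?N" using card_inj_on_le finite_carrier by blast
    then show False by simp
  qed
  then obtain i j :: nat where "i \<noteq> j" "g [^] i = g [^] j" unfolding inj_on_def by blast
  then obtain a b :: nat where "a < b" "g [^] b = g [^] a" by (metis linorder_neqE_nat)
  then show thesis using that[of "b - a"] pow_eq_div2[OF g] by simp
qed

definition coeff_mat :: "(nat \<Rightarrow> 'a) \<Rightarrow> ('a \<Rightarrow> complex) \<Rightarrow> 'a \<Rightarrow> complex mat" where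
  "coeff_mat e E x = mat (card (carrier G)) (card (carrier G)) (\<lambda>(a,c). E (inv (e c) \<otimes> x \<otimes> e a))"

lemma coeff_mat_carrier: "coeff_mat e E x \<in> carrier_mat (card (carrier G)) (card (carrier G))"
  unfolding coeff_mat_def by simp

lemma coeff_mat_mult:
  assumes e: "bij_betw e {..<card (carrier G)} (carrier G)"
    and E_idem: "\<And>g. g \<in> carrier G \<Longrightarrow> conv E E g = E g"
    and x: "x \<in> carrier G" and y: "y \<in> carrier G"
  shows "coeff_mat e E x * coeff_mat e E y = coeff_mat e E (y \<otimes> x)"
proof (rule eq_matI)
  let ?N = "card (carrier G)"
  have e_in: "e i \<in> carrier G" if "i < ?N" for i using e that unfolding bij_betw_def by auto
  fix a c assume "a < dim_row (coeff_mat e E (y \<otimes> x))" "c < dim_col (coeff_mat e E (y \<otimes> x))"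
  then have a: "a < ?N" and c: "c < ?N" unfolding coeff_mat_def by auto
  define k where "k = inv (e c) \<otimes> y"
  have k: "k \<in> carrier G" unfolding k_def using e_in[OF c] y by simp
  have "(coeff_mat e E x * coeff_mat e E y) $$ (a,c) = (\<Sum>b<?N. E (inv (e b) \<otimes> x \<otimes> e a) * E (k \<otimes> e b))"
    using index_mult_mat_sum[OF coeff_mat_carrier coeff_mat_carrier a c] a c unfolding coeff_mat_def k_def by simp
  also have "\<dots> = (\<Sum>z\<in>carrier G. E (inv z \<otimes> x \<otimes> e a) * E (k \<otimes> z))"
    using sum.reindex_bij_betw[OF e, of "\<lambda>z. E (inv z \<otimes> x \<otimes> e a) * E (k \<otimes> z)"] .
  also have "\<dots> = (\<Sum>w\<in>carrier G. E (inv (inv k \<otimes> w) \<otimes> x \<otimes> e a) * E (k \<otimes> (inv k \<otimes> w)))"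
    by (rule sum_carrier_lmult[OF inv_closed[OF k], symmetric])
  also have "\<dots> = (\<Sum>w\<in>carrier G. E w * E (inv w \<otimes> (k \<otimes> x \<otimes> e a)))"
  proof (rule sum.cong[OF refl])
    fix w assume w: "w \<in> carrier G"
    have "k \<otimes> (inv k \<otimes> w) = w" using k w by (simp add: m_assoc[symmetric])
    moreover have "inv (inv k \<otimes> w) \<otimes> x \<otimes> e a = inv w \<otimes> (k \<otimes> x \<otimes> e a)"
      using k w x e_in[OF a] by (simp add: inv_mult_group m_assoc)
    ultimately show "E (inv (inv k \<otimes> w) \<otimes> x \<otimes> e a) * E (k \<otimes> (inv k \<otimes> w)) =
        E w * E (inv w \<otimes> (k \<otimes> x \<otimes> e a))" by (simp add: mult.commute)
  qed
  also have "\<dots> = E (k \<otimes> x \<otimes> e a)"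
    using E_idem[of "k \<otimes> x \<otimes> e a"] k x e_in[OF a] unfolding conv_def by simp
  also have "\<dots> = coeff_mat e E (y \<otimes> x) $$ (a,c)"
    using a c e_in[OF c] x y unfolding coeff_mat_def k_def by (simp add: m_assoc)
  finally show "(coeff_mat e E x * coeff_mat e E y) $$ (a,c) = coeff_mat e E (y \<otimes> x) $$ (a,c)" .
qed (simp_all add: coeff_mat_def)

lemma mat_trace_coeff_mat:
  assumes e: "bij_betw e {..<card (carrier G)} (carrier G)"
    and E_conj: "\<And>x g. x \<in> carrier G \<Longrightarrow> g \<in> carrier G \<Longrightarrow> E (x \<otimes> g \<otimes> inv x) = E g"
    and g: "g \<in> carrier G"
  shows "mat_trace (coeff_mat e E g) = of_nat (card (carrier G)) * E g"
proof -
  have "mat_trace (coeff_mat e E g) = (\<Sum>a<card (carrier G). E (inv (e a) \<otimes> g \<otimes> e a))"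
    unfolding mat_trace_def coeff_mat_def by simp
  also have "\<dots> = (\<Sum>y\<in>carrier G. E (inv y \<otimes> g \<otimes> y))"
    by (rule sum.reindex_bij_betw[OF e])
  also have "\<dots> = (\<Sum>y\<in>carrier G. E g)"
  proof (rule sum.cong[OF refl])
    fix y assume y: "y \<in> carrier G"
    show "E (inv y \<otimes> g \<otimes> y) = E g" using E_conj[OF inv_closed[OF y] g] y by simp
  qed
  finally show ?thesis by simp
qed

lemma rational_central_idempotent_Ints:
  assumes E_rat: "\<And>g. g \<in> carrier G \<Longrightarrow> E g \<in> \<rat>"
    and E_idem: "\<And>g. g \<in> carrier G \<Longrightarrow> conv E E g = E g"
    and E_conj: "\<And>x g. x \<in> carrier G \<Longrightarrow> g \<in> carrier G \<Longrightarrow> E (x \<otimes> g \<otimes> inv x) = E g"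
    and g: "g \<in> carrier G"
  shows "of_nat (card (carrier G)) * E g \<in> \<int>"
proof -
  obtain e where e: "bij_betw e {..<card (carrier G)} (carrier G)"
    using ex_bij_betw_nat_finite[OF finite_carrier] by (auto simp: atLeast0LessThan)
  let ?Y = "coeff_mat e E g"
  have pow: "?Y ^\<^sub>m Suc k = coeff_mat e E (g [^] Suc k)" for k
  proof (induction k)
    case (Suc k)
    have "?Y ^\<^sub>m Suc (Suc k) = coeff_mat e E (g [^] Suc k) * ?Y" using Suc by simp
    also have "\<dots> = coeff_mat e E (g [^] Suc (Suc k))"
      using coeff_mat_mult[OF e E_idem _ g, of "g [^] Suc k"] g by (simp only: nat_pow_Suc2[OF g, symmetric] nat_pow_closed)
    finally show ?case .
  qed (use g in \<open>simp add: coeff_mat_carrier\<close>)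
  obtain K :: nat where K: "0 < K" "g [^] K = \<one>" using exists_pow_eq_one[OF g] by blast
  then have "g [^] Suc K = g" using g by simp
  then have periodic: "?Y ^\<^sub>m Suc K = ?Y" by (simp only: pow)
  have "e a \<in> carrier G" if "a < card (carrier G)" for a using e that unfolding bij_betw_def by auto
  then have "mat_trace ?Y \<in> \<rat>"
    unfolding mat_trace_def coeff_mat_def using E_rat g by (intro Rats_sum) simp
  moreover have "mat_trace ?Y = of_nat (card (carrier G)) * E g"
    by (rule mat_trace_coeff_mat[OF e _ g]) (fact E_conj)
  ultimately show ?thesis
    using mat_trace_of_periodic_mat_Ints[OF coeff_mat_carrier[of e E g] K(1) periodic] by simp
qed

lemma finite_group_subgroup:
  assumes N: "subgroup N G"
  shows "finite_group (G\<lparr>carrier := N\<rparr>)"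
proof (rule finite_group.intro)
  show "group (G\<lparr>carrier := N\<rparr>)" by (rule subgroup_imp_group[OF N])
  show "finite_group_axioms (G\<lparr>carrier := N\<rparr>)"
    unfolding finite_group_axioms_def using finite_subset[OF subgroup.subset[OF N] finite_carrier] by simp
qed

lemma conv_subgroup:
  assumes N: "subgroup N G" and f: "\<And>x. x \<in> carrier G \<Longrightarrow> x \<notin> N \<Longrightarrow> f x = 0" and g: "g \<in> N"
  shows "finite_group.conv (G\<lparr>carrier := N\<rparr>) f h g = conv f h g"
proof -
  interpret H: finite_group "G\<lparr>carrier := N\<rparr>" by (rule finite_group_subgroup[OF N])
  have "H.conv f h g = (\<Sum>x\<in>N. f x * h (inv x \<otimes> g))"
    unfolding H.conv_def by (intro sum.cong) (simp_all add: N)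
  also have "\<dots> = conv f h g"
    unfolding conv_def
    by (rule sum.mono_neutral_left[OF finite_carrier subgroup.subset[OF N]]) (simp add: f)
  finally show ?thesis .
qed

lemma rational_central_idempotent_subgroup_Ints:
  assumes N: "subgroup N G" and E: "rat_supported N E"
    and E_idem: "\<And>g. g \<in> carrier G \<Longrightarrow> conv E E g = E g"
    and E_conj: "\<And>x g. x \<in> carrier G \<Longrightarrow> g \<in> carrier G \<Longrightarrow> E (x \<otimes> g \<otimes> inv x) = E g"
    and g: "g \<in> N"
  shows "of_nat (card N) * E g \<in> \<int>"
proof -
  interpret H: finite_group "G\<lparr>carrier := N\<rparr>" by (rule finite_group_subgroup[OF N])
  have N_sub: "x \<in> carrier G" if "x \<in> N" for x using subgroup.subset[OF N] that by blast
  have E_supp: "E x = 0" if "x \<in> carrier G" "x \<notin> N" for x using E that unfolding rat_supported_def by blast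
  have "of_nat (card (carrier (G\<lparr>carrier := N\<rparr>))) * E g \<in> \<int>"
  proof (rule H.rational_central_idempotent_Ints)
    fix x y assume x: "x \<in> carrier (G\<lparr>carrier := N\<rparr>)" and y: "y \<in> carrier (G\<lparr>carrier := N\<rparr>)"
    show "E (x \<otimes>\<^bsub>G\<lparr>carrier := N\<rparr>\<^esub> y \<otimes>\<^bsub>G\<lparr>carrier := N\<rparr>\<^esub> inv\<^bsub>G\<lparr>carrier := N\<rparr>\<^esub> x) = E y"
      using x y N N_sub E_conj by simp
  next
    fix x assume x: "x \<in> carrier (G\<lparr>carrier := N\<rparr>)"
    show "E x \<in> \<rat>" using E N_sub x unfolding rat_supported_def by simp
    show "H.conv E E x = E x" using conv_subgroup[OF N E_supp] x N_sub E_idem by simp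
  qed (use g in simp)
  then show ?thesis by simp
qed

end

theorem lemma3p7:
  fixes G :: "('a, 'b) monoid_scheme" and d :: nat
  assumes "group G" and "finite (carrier G)"
  shows "\<forall>g\<in>carrier G.
           of_nat (card (derived G (carrier G))) * E_deg G d g \<in> \<int> \<and>
           (g \<notin> derived G (carrier G) \<longrightarrow> E_deg G d g = 0)"
proof -
  interpret finite_group G
    using assms by (simp add: finite_group_def finite_group_axioms_def)
  have N: "subgroup (derived G (carrier G)) G" by (rule derived_is_subgroup) simp
  have E: "rat_supported (derived G (carrier G)) (E_deg G d)" by (rule rat_supported_E_deg)
  have "of_nat (card (derived G (carrier G))) * E_deg G d g \<in> \<int>" if "g \<in> derived G (carrier G)" for g
    using N E conv_E_deg_self E_deg_conj that by (rule rational_central_idempotent_subgroup_Ints)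
  then show ?thesis using E unfolding rat_supported_def by fastforce
qed

end
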